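(* Suppose the Drift Assumption, the Unbiased Noise Assumption and the Lipschitz Assumption hold, and that the $p$-th Moment Noise Assumption holds for every $p>1$ (with constants $A_p>0$, $B_p\ge 0$ allowed to depend on $p$). Let the step sizes be $\alpha_k=\alpha(k+K)^{-\xi}$ with constants $\alpha,K>0$ and any $\xi\in(0,1]$. Then the iterates of $x_{k+1}=x_k+\alpha_k(H(x_k)-x_k+w_k)$ converge almost surely to $x^\star$, the solution of $H(x)=x$.
   Context: Let $\|\cdot\|$ denote the Euclidean norm on $\mathbb{R}^d$ and $\langle\cdot,\cdot\rangle$ the Euclidean inner product. Let $H:\mathbb{R}^d\to\mathbb{R}^d$ and consider the stochastic approximation iteration $x_{k+1}=x_k+\alpha_k\big(H(x_k)-x_k+w_k\big)$, $k\ge 0$, where $x_0$ is an initial point, $(\alpha_k)_{k\ge0}$ are positive step sizes and $(w_k)_{k\ge0}$ are random vectors in $\mathbb{R}^d$ defined on a common probability space. Let $\mathcal F_k=\sigma(x_0,x_1,\dots,x_k)$. Drift Assumption: there is $x^\star\in\mathbb{R}^d$ with $H(x^\star)=x^\star$, a differentiable function $\Phi:\mathbb{R}^d\to[0,\infty)$ and constants $\eta,c_1,c_2,L_2>0$ such that (i) $\langle\nabla\Phi(x-x^\star),H(x)-x\rangle\le-\eta\,\Phi(x-x^\star)$ for all $x\in\mathbb{R}^d$; (ii) $\Phi(y)\le\Phi(x)+\langle\nabla\Phi(x),y-x\rangle+\frac{L_2}{2}\|y-x\|^2$ for all $x,y\in\mathbb{R}^d$; (iii) $c_1\|x-x^\star\|^2\le\Phi(x-x^\star)\le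 c_2\|x-x^\star\|^2$ for all $x\in\mathbb{R}^d$. Unbiased Noise Assumption: each $w_k$ is integrable and $\mathbb{E}[w_k\mid\mathcal F_k]=0$ almost surely for all $k\ge0$. $p$-th Moment Noise Assumption (for a given $p>1$): there are constants $A_p>0$, $B_p\ge0$ such that $\mathbb{E}[\|w_k\|^p\mid\mathcal F_k]\le A_p+B_p\|x_k-x^\star\|^p$ almost surely for all $k\ge 0$. Lipschitz Assumption: there is $C>0$ with $\|H(x)-H(y)\|\le C\|x-y\|$ for all $x,y\in\mathbb{R}^d$. *)

theory Defs
  imports "HOL-Probability.Probability"
begin

definition natural_filtration ::
  "'a measure \<Rightarrow> (nat \<Rightarrow> 'a \<Rightarrow> 'b::topological_space) \<Rightarrow> nat \<Rightarrow> 'a measure" where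
  "natural_filtration M X k =
     sigma (space M) (\<Union>i\<in>{..k}. {X i -` B \<inter> space M | B. B \<in> sets borel})"

end

theory Submission
  imports Defs
begin

(* With V k = \<Phi>(x k - xs), smoothness and the drift condition give
     V (k+1) \<le> \<beta> k V k + \<alpha> k <\<nabla>\<Phi>, w k> + L2 \<alpha> k^2 |w k|^2,   \<beta> k = 1 - \<eta> \<alpha> k + O(\<alpha> k^2).
   Since the squared step sizes need not be summable (\<xi> \<le> 1/2), second moments do not
   suffice. Instead raise the inequality to a large even power n: conditionally on the past the
   term linear in w k vanishes, and the conditional moment bounds on the noise turn the rest into
   a polynomial in V k in which every remainder term is of higher order in \<alpha> k. On the event
   that x 0 is bounded this yields E[V (k+1)^n] \<le> (1 - c \<alpha> k) E[V k^n] + K' \<alpha> k^(n+1), hence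
   E[V k^n] = O(1/k^2) for n large. So the V k^n are almost surely summable, V k \<rightarrow> 0 and
   x k \<rightarrow> xs. *)

section \<open>Elementary inequalities\<close>

lemma power_add_le_two_power:
  fixes a b :: real
  assumes "0 \<le> a" "0 \<le> b"
  shows "(a + b) ^ n \<le> 2 ^ n * (a ^ n + b ^ n)"
proof -
  have "(a + b) ^ n \<le> (2 * max a b) ^ n" by (rule power_mono) (use assms in auto)
  also have "\<dots> = 2 ^ n * max a b ^ n" by (simp add: power_mult_distrib)
  also have "max a b ^ n \<le> a ^ n + b ^ n" using assms by (cases "a \<le> b") (auto simp: max_def)
  finally show ?thesis by (simp add: mult_left_mono)
qed

lemma mult_power_le_power_add:
  fixes x y :: real
  assumes "0 \<le> x" "0 \<le> y" "j \<le> n"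
  shows "x ^ j * y ^ (n - j) \<le> x ^ n + y ^ n"
proof -
  have "x ^ j * y ^ (n - j) \<le> max x y ^ j * max x y ^ (n - j)"
    using assms by (intro mult_mono power_mono) auto
  also have "\<dots> = max x y ^ n" using assms by (simp flip: power_add)
  also have "\<dots> \<le> x ^ n + y ^ n" using assms by (cases "x \<le> y") (auto simp: max_def)
  finally show ?thesis .
qed

lemma young_power_le:
  fixes a v \<epsilon> :: real
  assumes a: "0 \<le> a" "a \<le> 1" and v: "0 \<le> v" and \<epsilon>: "0 < \<epsilon>" "\<epsilon> \<le> 1"
    and "j < n" "n - j \<le> r"
  shows "a ^ Suc r * v ^ j \<le> \<epsilon> * a * v ^ n + a ^ Suc n / \<epsilon> ^ n"
proof -
  have "\<epsilon> ^ j * (v ^ j * a ^ (n - j)) = (\<epsilon> * v) ^ j * a ^ (n - j)"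
    by (simp add: power_mult_distrib)
  also have "\<dots> \<le> (\<epsilon> * v) ^ n + a ^ n"
    by (rule mult_power_le_power_add) (use assms in auto)
  also have "\<dots> = \<epsilon> ^ j * (\<epsilon> ^ (n - j) * v ^ n) + a ^ n"
    using \<open>j < n\<close> by (simp add: power_mult_distrib mult.assoc flip: power_add)
  finally have "v ^ j * a ^ (n - j) \<le> \<epsilon> ^ (n - j) * v ^ n + a ^ n / \<epsilon> ^ j"
    using \<epsilon> by (simp add: field_simps)
  also have "\<epsilon> ^ (n - j) * v ^ n \<le> \<epsilon> ^ 1 * v ^ n"
    using assms by (intro mult_right_mono power_decreasing) auto
  also have "a ^ n / \<epsilon> ^ j \<le> a ^ n / \<epsilon> ^ n"
    using assms by (intro divide_left_mono power_decreasing mult_pos_pos) auto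
  finally have *: "v ^ j * a ^ (n - j) \<le> \<epsilon> * v ^ n + a ^ n / \<epsilon> ^ n" by simp
  have "a ^ r * v ^ j \<le> a ^ (n - j) * v ^ j" using assms by (intro mult_right_mono power_decreasing) auto
  also have "\<dots> \<le> \<epsilon> * v ^ n + a ^ n / \<epsilon> ^ n" using * by (simp add: mult.commute)
  finally have "a * (a ^ r * v ^ j) \<le> a * (\<epsilon> * v ^ n + a ^ n / \<epsilon> ^ n)" using a(1) by (rule mult_left_mono)
  thus ?thesis by (simp add: algebra_simps)
qed

lemma power_monomial_absorb:
  fixes a V \<epsilon> :: real
  assumes a: "0 < a" "a \<le> 1" and V: "0 \<le> V" and \<epsilon>: "0 < \<epsilon>" "\<epsilon> \<le> 1" and j: "1 \<le> j" "j \<le> n"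
  shows "a ^ (2 * j) * (V ^ (n - j) + V ^ n) \<le> (\<epsilon> + a) * a * V ^ n + a ^ Suc n / \<epsilon> ^ n"
proof -
  have low: "a ^ (2 * j) * V ^ (n - j) \<le> \<epsilon> * a * V ^ n + a ^ Suc n / \<epsilon> ^ n"
  proof (cases "j < n")
    case True
    have "a ^ Suc (2 * j - 1) * V ^ (n - j) \<le> \<epsilon> * a * V ^ n + a ^ Suc n / \<epsilon> ^ n"
      by (rule young_power_le) (use assms True in auto)
    thus ?thesis using j by simp
  next
    case False
    hence "j = n" using j by simp
    have "a ^ (2 * n) \<le> a ^ Suc n" using a j \<open>j = n\<close> by (intro power_decreasing) auto
    also have "\<dots> \<le> a ^ Suc n / \<epsilon> ^ n"
      using a \<epsilon> by (simp add: le_divide_eq power_le_one)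
    moreover have "0 \<le> \<epsilon> * a * V ^ n" using a \<epsilon> V by simp
    ultimately show ?thesis using \<open>j = n\<close> by simp
  qed
  have "a ^ (2 * j) \<le> a ^ 2" using a j by (intro power_decreasing) auto
  hence "a ^ (2 * j) * V ^ n \<le> a * a * V ^ n" using V by (simp add: mult_right_mono power2_eq_square)
  with low show ?thesis by (simp add: algebra_simps)
qed

lemma one_minus_power_le:
  fixes b :: real
  assumes "0 \<le> b" "b \<le> 1"
  shows "(1 - b) ^ n \<le> 1 - n * b + (real n)\<^sup>2 * b\<^sup>2"
proof (induction n)
  case (Suc n)
  have "(1 - b) ^ Suc n \<le> (1 - b) * (1 - n * b + (real n)\<^sup>2 * b\<^sup>2)"
    using Suc assms by (simp add: mult_left_mono)
  also have "\<dots> \<le> 1 - Suc n * b + (real (Suc n))\<^sup>2 * b\<^sup>2"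
    using assms by (simp add: power2_eq_square algebra_simps mult_nonneg_nonneg)
  finally show ?case .
qed simp

text \<open>The binomial terms of order at least two in Y are
  interpolated between X^(n-2) Y^2 and \<bar>Y\<bar>^n.\<close>
lemma power_add_le_first_order:
  fixes X Y :: real
  assumes X: "0 \<le> X" and n: "2 \<le> n"
  shows "(X + Y) ^ n \<le> X ^ n + n * X ^ (n - 1) * Y + 2 ^ n * (X ^ (n - 2) * Y\<^sup>2 + \<bar>Y\<bar> ^ n)"
proof -
  have higher: "Y ^ k * X ^ (n - k) \<le> X ^ (n - 2) * Y\<^sup>2 + \<bar>Y\<bar> ^ n" if k: "2 \<le> k" "k \<le> n" for k
  proof -
    have "Y ^ k * X ^ (n - k) \<le> \<bar>Y\<bar> ^ k * X ^ (n - k)"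
      using X by (intro mult_right_mono) (auto simp flip: power_abs)
    also have "\<bar>Y\<bar> ^ k = Y\<^sup>2 * \<bar>Y\<bar> ^ (k - 2)"
      using k by (metis le_add_diff_inverse power_add power2_abs)
    also have "Y\<^sup>2 * \<bar>Y\<bar> ^ (k - 2) * X ^ (n - k) \<le> Y\<^sup>2 * (\<bar>Y\<bar> ^ (n - 2) + X ^ (n - 2))"
    proof -
      have "\<bar>Y\<bar> ^ (k - 2) * X ^ (n - 2 - (k - 2)) \<le> \<bar>Y\<bar> ^ (n - 2) + X ^ (n - 2)"
        by (rule mult_power_le_power_add) (use X k in auto)
      moreover have "n - 2 - (k - 2) = n - k" using k by arith
      ultimately have "\<bar>Y\<bar> ^ (k - 2) * X ^ (n - k) \<le> \<bar>Y\<bar> ^ (n - 2) + X ^ (n - 2)" by metis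
      thus ?thesis by (simp add: mult.assoc mult_left_mono)
    qed
    also have "\<dots> = X ^ (n - 2) * Y\<^sup>2 + \<bar>Y\<bar> ^ n"
      using n by (simp add: algebra_simps) (metis le_add_diff_inverse power_add power2_abs)
    finally show ?thesis .
  qed
  have "(X + Y) ^ n = (\<Sum>k\<le>n. real (n choose k) * Y ^ k * X ^ (n - k))"
    by (subst add.commute, rule binomial_ring)
  also have "{..n} = {0, 1} \<union> {2..n}" using n by auto
  also have "(\<Sum>k\<in>{0, 1} \<union> {2..n}. real (n choose k) * Y ^ k * X ^ (n - k))
      = X ^ n + n * X ^ (n - 1) * Y + (\<Sum>k=2..n. real (n choose k) * (Y ^ k * X ^ (n - k)))"
    by (subst sum.union_disjoint) (auto simp: mult.assoc)
  also have "(\<Sum>k=2..n. real (n choose k) * (Y ^ k * X ^ (n - k)))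
      \<le> (\<Sum>k=2..n. real (n choose k)) * (X ^ (n - 2) * Y\<^sup>2 + \<bar>Y\<bar> ^ n)"
    unfolding sum_distrib_right by (intro sum_mono mult_left_mono higher) auto
  also have "(\<Sum>k=2..n. real (n choose k)) \<le> (\<Sum>k\<le>n. real (n choose k))"
    by (rule sum_mono2) auto
  also have "\<dots> = 2 ^ n" by (simp flip: choose_row_sum of_nat_sum)
  finally show ?thesis using X by (simp add: mult_right_mono)
qed

lemma power_contraction_le:
  fixes \<eta> D :: real
  assumes \<eta>: "0 < \<eta>" and D: "0 \<le> D"
  obtains a0 where "0 < a0" "a0 \<le> 1"
    "\<And>a. 0 < a \<Longrightarrow> a \<le> a0 \<Longrightarrow> 0 \<le> 1 - \<eta> * a + D * a\<^sup>2 \<and> 1 - \<eta> * a + D * a\<^sup>2 \<le> 1 \<and>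
      (1 - \<eta> * a + D * a\<^sup>2) ^ n \<le> 1 - real n * \<eta> * a / 2"
proof
  define G where "G = D + real n * \<eta>\<^sup>2"
  have G: "0 \<le> G" unfolding G_def using D by simp
  define a0 where "a0 = min (\<eta> / (D + 1)) (min (1 / (\<eta> + 1)) (\<eta> / (2 * G + 1)))"
  have "1 / (\<eta> + 1) \<le> 1" using \<eta> by simp
  then show "0 < a0" "a0 \<le> 1" unfolding a0_def using \<eta> D G by (auto simp: min_le_iff_disj)
  fix a :: real assume a: "0 < a" "a \<le> a0"
  define b where "b = \<eta> * a - D * a\<^sup>2"
  have "a * (D + 1) \<le> \<eta>" "a * (\<eta> + 1) \<le> 1" "a * (2 * G + 1) \<le> \<eta>"
    using a \<eta> D G by (auto simp: a0_def pos_le_divide_eq mult.commute)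
  hence Da: "D * a \<le> \<eta>" and \<eta>a: "\<eta> * a \<le> 1" and Ga: "2 * a * G \<le> \<eta>"
    using a by (auto simp: algebra_simps)
  have b: "0 \<le> b" "b \<le> \<eta> * a"
    unfolding b_def using a D Da \<eta>a
    by (auto simp: power2_eq_square mult_right_mono mult.assoc[symmetric] intro: mult_nonneg_nonneg)
  have "(1 - b) ^ n \<le> 1 - n * b + (real n)\<^sup>2 * b\<^sup>2" using b \<eta>a by (intro one_minus_power_le) auto
  also have "(real n)\<^sup>2 * b\<^sup>2 \<le> (real n)\<^sup>2 * (\<eta> * a)\<^sup>2" using b by (intro mult_left_mono power_mono) auto
  also have "1 - n * b + (real n)\<^sup>2 * (\<eta> * a)\<^sup>2 = 1 - n * \<eta> * a + n * a * (a * G)"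
    unfolding b_def G_def by (simp add: algebra_simps power2_eq_square)
  also have "n * a * (a * G) \<le> n * a * (\<eta> / 2)" using Ga a by (intro mult_left_mono) auto
  finally show "0 \<le> 1 - \<eta> * a + D * a\<^sup>2 \<and> 1 - \<eta> * a + D * a\<^sup>2 \<le> 1 \<and>
      (1 - \<eta> * a + D * a\<^sup>2) ^ n \<le> 1 - real n * \<eta> * a / 2"
    using b \<eta>a unfolding b_def by (simp add: algebra_simps)
qed

lemma drift_polynomial_bound:
  fixes \<eta> D Q :: real
  assumes \<eta>: "0 < \<eta>" and D: "0 \<le> D" and Q: "0 \<le> Q"
  obtains a1 Kc where "0 < a1" "0 \<le> Kc"
    "\<And>a. 0 < a \<Longrightarrow> a \<le> a1 \<Longrightarrow> 0 \<le> 1 - \<eta> * a + D * a\<^sup>2 \<and> 1 - \<eta> * a + D * a\<^sup>2 \<le> 1"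
    "\<And>a V. 0 < a \<Longrightarrow> a \<le> a1 \<Longrightarrow> 0 \<le> V \<Longrightarrow>
      (1 - \<eta> * a + D * a\<^sup>2) ^ n * V ^ n + Q * (\<Sum>j=1..n. a ^ (2 * j) * (V ^ (n - j) + V ^ n))
        \<le> (1 - real n * \<eta> / 4 * a) * V ^ n + Kc * a ^ Suc n"
proof -
  obtain a0 where a0: "0 < a0" "a0 \<le> 1" and contr: "\<And>a. 0 < a \<Longrightarrow> a \<le> a0 \<Longrightarrow>
      0 \<le> 1 - \<eta> * a + D * a\<^sup>2 \<and> 1 - \<eta> * a + D * a\<^sup>2 \<le> 1 \<and>
      (1 - \<eta> * a + D * a\<^sup>2) ^ n \<le> 1 - real n * \<eta> * a / 2"
    using power_contraction_le[OF \<eta> D] by blast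
  define \<epsilon> where "\<epsilon> = min a0 (\<eta> / (8 * Q + 1))"
  have \<epsilon>: "0 < \<epsilon>" "\<epsilon> \<le> 1" using a0 \<eta> Q unfolding \<epsilon>_def by auto
  have Q\<epsilon>: "2 * Q * \<epsilon> \<le> \<eta> / 4"
  proof -
    have "8 * Q * \<epsilon> \<le> (8 * Q + 1) * \<epsilon>" using \<epsilon> by (simp add: mult_right_mono)
    also have "\<dots> \<le> (8 * Q + 1) * (\<eta> / (8 * Q + 1))"
      using Q unfolding \<epsilon>_def by (intro mult_left_mono) auto
    also have "\<dots> = \<eta>" using Q by simp
    finally show ?thesis by simp
  qed
  show thesis
  proof
    show "0 < \<epsilon>" "0 \<le> Q * n / \<epsilon> ^ n" using \<epsilon> Q by auto
    fix a assume a: "0 < a" "a \<le> \<epsilon>"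
    hence a': "a \<le> a0" "a \<le> 1" using \<epsilon> unfolding \<epsilon>_def by auto
    show "0 \<le> 1 - \<eta> * a + D * a\<^sup>2 \<and> 1 - \<eta> * a + D * a\<^sup>2 \<le> 1" using contr a a' by blast
    fix V :: real assume V: "0 \<le> V"
    have "(\<Sum>j=1..n. a ^ (2 * j) * (V ^ (n - j) + V ^ n))
        \<le> (\<Sum>j=1..n. (\<epsilon> + a) * a * V ^ n + a ^ Suc n / \<epsilon> ^ n)"
      using a a' V \<epsilon> by (intro sum_mono power_monomial_absorb) auto
    also have "\<dots> = n * ((\<epsilon> + a) * a * V ^ n) + n * (a ^ Suc n / \<epsilon> ^ n)"
      by (simp add: distrib_left)
    finally have "Q * (\<Sum>j=1..n. a ^ (2 * j) * (V ^ (n - j) + V ^ n))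
        \<le> Q * (n * ((\<epsilon> + a) * a * V ^ n) + n * (a ^ Suc n / \<epsilon> ^ n))"
      using Q by (rule mult_left_mono)
    also have "\<dots> = n * (Q * (\<epsilon> + a)) * a * V ^ n + Q * n / \<epsilon> ^ n * a ^ Suc n"
      by (simp add: algebra_simps)
    also have "n * (Q * (\<epsilon> + a)) * a * V ^ n \<le> n * (\<eta> / 4) * a * V ^ n"
      using Q\<epsilon> a Q V mult_left_mono[OF a(2) Q] by (intro mult_right_mono mult_left_mono) (auto simp: algebra_simps)
    moreover have "(1 - \<eta> * a + D * a\<^sup>2) ^ n * V ^ n \<le> (1 - real n * \<eta> * a / 2) * V ^ n"
      using contr[OF a(1) a'(1)] V by (intro mult_right_mono) auto
    ultimately show "(1 - \<eta> * a + D * a\<^sup>2) ^ n * V ^ n + Q * (\<Sum>j=1..n. a ^ (2 * j) * (V ^ (n - j) + V ^ n))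
        \<le> (1 - real n * \<eta> / 4 * a) * V ^ n + Q * n / \<epsilon> ^ n * a ^ Suc n"
      by (simp add: algebra_simps)
  qed
qed

lemma square_add_le:
  fixes p q :: real
  shows "(p + q)\<^sup>2 \<le> 2 * p\<^sup>2 + 2 * q\<^sup>2"
proof -
  have "0 \<le> (p - q)\<^sup>2" by simp
  thus ?thesis by (simp add: power2_eq_square algebra_simps)
qed

lemma lyapunov_power_step_le:
  fixes V V' \<beta> a s N L :: real
  assumes V: "0 \<le> V" and V': "0 \<le> V'" and N: "0 \<le> N" and L: "0 \<le> L"
    and \<beta>: "0 \<le> \<beta>" "\<beta> \<le> 1" and a: "0 \<le> a" and n: "n = 2 * m" "1 \<le> m"
    and s: "s\<^sup>2 \<le> 2 * L * V * N"
    and step: "V' \<le> \<beta> * V + a * s + L * a\<^sup>2 * N"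
  shows "V' ^ n \<le> \<beta> ^ n * V ^ n + n * \<beta> ^ (n - 1) * V ^ (n - 1) * a * s
     + (n * L + 2 ^ n * 4 * L) * (a ^ 2 * V ^ (n - 1) * N)
     + (2 ^ n * 2 * L\<^sup>2) * (a ^ 4 * V ^ (n - 2) * N\<^sup>2)
     + (4 ^ n * (2 * L) ^ m) * (a ^ n * V ^ m * N ^ m)
     + (4 ^ n * L ^ n) * (a ^ (2 * n) * N ^ n)"
proof -
  define X where "X = \<beta> * V"
  define Y where "Y = a * s + L * a\<^sup>2 * N"
  have X: "0 \<le> X" "X \<le> V" unfolding X_def using V \<beta> by (auto simp: mult_left_le_one_le)
  have "V' ^ n \<le> (X + Y) ^ n" using V' step unfolding X_def Y_def by (intro power_mono) auto
  also have "\<dots> \<le> X ^ n + n * X ^ (n - 1) * Y + 2 ^ n * (X ^ (n - 2) * Y\<^sup>2 + \<bar>Y\<bar> ^ n)"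
    using X n by (intro power_add_le_first_order) auto
  also have "n * X ^ (n - 1) * Y \<le> n * \<beta> ^ (n - 1) * V ^ (n - 1) * a * s + n * L * (a ^ 2 * V ^ (n - 1) * N)"
  proof -
    have "X ^ (n - 1) * (L * a\<^sup>2 * N) \<le> V ^ (n - 1) * (L * a\<^sup>2 * N)"
      using X L a N by (intro mult_right_mono power_mono) auto
    hence "n * (X ^ (n - 1) * (L * a\<^sup>2 * N)) \<le> n * (V ^ (n - 1) * (L * a\<^sup>2 * N))"
      by (rule mult_left_mono) simp
    thus ?thesis unfolding Y_def by (simp add: X_def algebra_simps power_mult_distrib)
  qed
  also have "X ^ (n - 2) * Y\<^sup>2 \<le> 4 * L * (a ^ 2 * V ^ (n - 1) * N) + 2 * L\<^sup>2 * (a ^ 4 * V ^ (n - 2) * N\<^sup>2)"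
  proof -
    have "Y\<^sup>2 \<le> 2 * (a\<^sup>2 * s\<^sup>2) + 2 * (L * a\<^sup>2 * N)\<^sup>2"
      unfolding Y_def using square_add_le[of "a * s" "L * a\<^sup>2 * N"] by (simp only: power_mult_distrib)
    also have "\<dots> \<le> 2 * (a\<^sup>2 * (2 * L * V * N)) + 2 * (L * a\<^sup>2 * N)\<^sup>2"
      using mult_left_mono[OF s zero_le_power2[of a]] by linarith
    finally have "X ^ (n - 2) * Y\<^sup>2 \<le> V ^ (n - 2) * (2 * (a\<^sup>2 * (2 * L * V * N)) + 2 * (L * a\<^sup>2 * N)\<^sup>2)"
      using X by (intro mult_mono power_mono) auto
    also have "V ^ (n - 2) * V = V ^ (n - 1)"
      using n by (simp add: Suc_diff_Suc numeral_2_eq_2 flip: power_Suc2)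
    hence "V ^ (n - 2) * (2 * (a\<^sup>2 * (2 * L * V * N)) + 2 * (L * a\<^sup>2 * N)\<^sup>2)
        = 4 * L * (a ^ 2 * V ^ (n - 1) * N) + 2 * L\<^sup>2 * (a ^ 4 * V ^ (n - 2) * N\<^sup>2)"
      by (simp add: algebra_simps power2_eq_square power4_eq_xxxx)
    finally show ?thesis .
  qed
  also have "\<bar>Y\<bar> ^ n \<le> 2 ^ n * ((2 * L) ^ m * (a ^ n * V ^ m * N ^ m) + L ^ n * (a ^ (2 * n) * N ^ n))"
  proof -
    have "\<bar>Y\<bar> ^ n \<le> (\<bar>a * s\<bar> + L * a\<^sup>2 * N) ^ n"
      unfolding Y_def using L a N by (intro power_mono) (auto intro: abs_triangle_ineq[THEN order_trans])
    also have "\<dots> \<le> 2 ^ n * (\<bar>a * s\<bar> ^ n + (L * a\<^sup>2 * N) ^ n)"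
      using L a N by (intro power_add_le_two_power) auto
    also have "\<bar>a * s\<bar> ^ n = (a\<^sup>2 * s\<^sup>2) ^ m" using n by (simp add: power_mult power_mult_distrib)
    also have "\<dots> \<le> (a\<^sup>2 * (2 * L * V * N)) ^ m" using s by (intro power_mono mult_left_mono) auto
    finally show ?thesis
      using n by (simp add: power_mult_distrib power_mult[symmetric] algebra_simps)
  qed
  finally have "V' ^ n \<le> X ^ n + (n * \<beta> ^ (n - 1) * V ^ (n - 1) * a * s + n * L * (a ^ 2 * V ^ (n - 1) * N))
    + 2 ^ n * ((4 * L * (a ^ 2 * V ^ (n - 1) * N) + 2 * L\<^sup>2 * (a ^ 4 * V ^ (n - 2) * N\<^sup>2))
    + 2 ^ n * ((2 * L) ^ m * (a ^ n * V ^ m * N ^ m) + L ^ n * (a ^ (2 * n) * N ^ n)))"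
    by simp
  moreover have "X ^ n = \<beta> ^ n * V ^ n" unfolding X_def by (simp add: power_mult_distrib)
  moreover have "(4::real) ^ n = 2 ^ n * 2 ^ n" by (simp flip: power_mult_distrib)
  ultimately show ?thesis by (simp add: algebra_simps)
qed

lemma lyapunov_power_expansion:
  fixes L :: real
  assumes L: "0 \<le> L" and n: "even n" "2 \<le> n"
  obtains q where "0 \<le> q"
    "\<And>V V' \<beta> a s N. 0 \<le> V \<Longrightarrow> 0 \<le> V' \<Longrightarrow> 0 \<le> N \<Longrightarrow> 0 \<le> \<beta> \<Longrightarrow> \<beta> \<le> 1 \<Longrightarrow> 0 \<le> a \<Longrightarrow>
      s\<^sup>2 \<le> 2 * L * V * N \<Longrightarrow> V' \<le> \<beta> * V + a * s + L * a\<^sup>2 * N \<Longrightarrow>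
      V' ^ n \<le> \<beta> ^ n * V ^ n + n * \<beta> ^ (n - 1) * V ^ (n - 1) * a * s
        + q * (\<Sum>j=1..n. a ^ (2 * j) * V ^ (n - j) * N ^ j)"
proof -
  obtain m where m: "n = 2 * m" "1 \<le> m" using n by (auto elim!: evenE)
  define q where "q = (n * L + 2 ^ n * 4 * L) + 2 ^ n * 2 * L\<^sup>2 + 4 ^ n * (2 * L) ^ m + 4 ^ n * L ^ n"
  show thesis
  proof
    show "0 \<le> q" unfolding q_def using L by simp
    fix V V' \<beta> a s N :: real
    assume V: "0 \<le> V" "0 \<le> V'" and N: "0 \<le> N" and \<beta>: "0 \<le> \<beta>" "\<beta> \<le> 1" and a: "0 \<le> a"
      and s: "s\<^sup>2 \<le> 2 * L * V * N" and step: "V' \<le> \<beta> * V + a * s + L * a\<^sup>2 * N"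
    define T where "T j = a ^ (2 * j) * V ^ (n - j) * N ^ j" for j
    define S where "S = (\<Sum>j=1..n. T j)"
    have T_le_S: "T j \<le> S" if "1 \<le> j" "j \<le> n" for j
      unfolding S_def using that V N a by (intro member_le_sum) (auto simp: T_def)
    have "a ^ 2 * V ^ (n - 1) * N = T 1" "a ^ 4 * V ^ (n - 2) * N\<^sup>2 = T 2"
      "a ^ n * V ^ m * N ^ m = T m" "a ^ (2 * n) * N ^ n = T n"
      unfolding T_def using m by simp_all
    with lyapunov_power_step_le[OF V(1,2) N L \<beta> a m s step]
    have expansion: "V' ^ n \<le> \<beta> ^ n * V ^ n + n * \<beta> ^ (n - 1) * V ^ (n - 1) * a * s
      + (n * L + 2 ^ n * 4 * L) * T 1 + (2 ^ n * 2 * L\<^sup>2) * T 2 + (4 ^ n * (2 * L) ^ m) * T m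
      + (4 ^ n * L ^ n) * T n"
      by simp
    have "(n * L + 2 ^ n * 4 * L) * T 1 + (2 ^ n * 2 * L\<^sup>2) * T 2 + (4 ^ n * (2 * L) ^ m) * T m
        + (4 ^ n * L ^ n) * T n \<le> q * S"
      unfolding q_def distrib_right using L by (intro add_mono mult_left_mono T_le_S) (use m in auto)
    with expansion have "V' ^ n \<le> \<beta> ^ n * V ^ n + n * \<beta> ^ (n - 1) * V ^ (n - 1) * a * s + q * S"
      by linarith
    thus "V' ^ n \<le> \<beta> ^ n * V ^ n + n * \<beta> ^ (n - 1) * V ^ (n - 1) * a * s
        + q * (\<Sum>j=1..n. a ^ (2 * j) * V ^ (n - j) * N ^ j)"
      unfolding S_def T_def .
  qed
qed

lemma step_size_tendsto_zero:
  fixes \<alpha>0 K \<xi> :: real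
  assumes "0 < \<xi>"
  shows "(\<lambda>k. \<alpha>0 * (real k + K) powr - \<xi>) \<longlonglongrightarrow> 0"
proof -
  have "filterlim (\<lambda>k. real k + K) at_top sequentially"
    using filterlim_tendsto_add_at_top[OF tendsto_const filterlim_real_sequentially, of K]
    by (simp add: add.commute)
  hence "(\<lambda>k. (real k + K) powr - \<xi>) \<longlonglongrightarrow> 0" using assms by (intro tendsto_neg_powr) auto
  thus ?thesis using tendsto_mult_right_zero by blast
qed

section \<open>A perturbed contraction recursion\<close>

lemma inverse_square_step:
  fixes t :: real
  assumes "1 \<le> t"
  shows "(1 - 2 / t) / t\<^sup>2 \<le> 1 / (t + 1)\<^sup>2"
proof -
  have "(t - 2) * (t + 1)\<^sup>2 \<le> t ^ 3" using assms by (simp add: power2_eq_square power3_eq_cube algebra_simps)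
  hence "(t - 2) / t ^ 3 \<le> 1 / (t + 1)\<^sup>2" using assms by (simp add: divide_simps)
  moreover have "(1 - 2 / t) / t\<^sup>2 = (t - 2) / t ^ 3"
    using assms by (simp add: field_simps power2_eq_square power3_eq_cube)
  ultimately show ?thesis by simp
qed

text \<open>A recursion u(k+1) \<le> (1 - c a_k) u_k + O(a_k^(n+1)) with a_k of order k^(-\<xi>) forces
  u_k = O(1/k^2) as soon as c a_k \<ge> 4/k and a_k^n = O(1/k^2): then M/t^2 is an invariant upper
  bound along t = k + K.\<close>
lemma summable_of_step_recursion:
  fixes u :: "nat \<Rightarrow> real" and n :: nat and \<alpha>0 K \<xi> c Kc :: real
  assumes u: "\<And>k. 0 \<le> u k"
    and rec: "\<forall>\<^sub>F k in sequentially. u (Suc k)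
      \<le> (1 - c * (\<alpha>0 * (real k + K) powr - \<xi>)) * u k + Kc * (\<alpha>0 * (real k + K) powr - \<xi>) ^ Suc n"
    and pos: "0 < \<alpha>0" "0 < K" "0 < \<xi>" "\<xi> \<le> 1" "0 < c" "0 \<le> Kc"
    and large: "4 \<le> c * \<alpha>0" "2 \<le> real n * \<xi>"
  shows "summable u"
proof -
  define t where "t k = real k + K" for k
  define a where "a k = \<alpha>0 * t k powr - \<xi>" for k
  have "\<forall>\<^sub>F k in sequentially. a k < 1 / c"
    using order_tendstoD(2)[OF step_size_tendsto_zero[OF pos(3)], of "1 / c"] pos
    unfolding a_def t_def by simp
  moreover have "\<forall>\<^sub>F k in sequentially. 1 \<le> k" by (rule eventually_ge_at_top)
  moreover note rec[folded t_def]
  ultimately have "\<forall>\<^sub>F k in sequentially.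
      u (Suc k) \<le> (1 - c * a k) * u k + Kc * a k ^ Suc n \<and> a k < 1 / c \<and> 1 \<le> k"
    by eventually_elim (simp add: a_def)
  then obtain k0 where k0: "\<And>k. k0 \<le> k \<Longrightarrow>
      u (Suc k) \<le> (1 - c * a k) * u k + Kc * a k ^ Suc n \<and> a k < 1 / c \<and> 1 \<le> k"
    unfolding eventually_sequentially by blast
  have t1: "1 \<le> t k" if "k0 \<le> k" for k using k0[OF that] pos unfolding t_def by simp
  define Mb where "Mb = max (u k0 * t k0 ^ 2) (2 * Kc * \<alpha>0 ^ n / c)"
  have Mb0: "0 \<le> Mb" unfolding Mb_def using u[of k0] by (simp add: le_max_iff_disj)
  have bound: "u k \<le> Mb / t k ^ 2" if "k0 \<le> k" for k
    using that
  proof (induction k rule: dec_induct)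
    case base
    then show ?case using t1[of k0] unfolding Mb_def by (simp add: pos_le_divide_eq)
  next
    case (step k)
    have tk: "1 \<le> t k" "0 < t k" using t1[OF step(1)] by auto
    have ak: "0 < a k" "c * a k \<le> 1" using k0[OF step(1)] pos tk unfolding a_def by (auto simp: field_simps)
    have "c * \<alpha>0 / t k \<le> c * a k"
    proof -
      have "t k powr - 1 \<le> t k powr - \<xi>" using tk pos by (intro powr_mono) auto
      thus ?thesis using tk pos unfolding a_def by (simp add: powr_neg_one divide_inverse)
    qed
    moreover have "4 / t k \<le> c * \<alpha>0 / t k" using large(1) tk by (intro divide_right_mono) auto
    ultimately have ca4: "4 / t k \<le> c * a k" by linarith
    have "a k ^ n = \<alpha>0 ^ n * t k powr (n * - \<xi>)"
      unfolding a_def using tk by (simp add: power_mult_distrib powr_powr mult.commute flip: powr_realpow)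
    also have "t k powr (n * - \<xi>) \<le> t k powr - 2" using tk large(2) by (intro powr_mono) auto
    also have "t k powr - 2 = 1 / t k ^ 2" using tk by (simp add: powr_minus_divide)
    finally have an: "a k ^ n \<le> \<alpha>0 ^ n / t k ^ 2" using pos by (simp add: mult_left_mono)
    have "Kc * a k ^ n \<le> Kc * (\<alpha>0 ^ n / t k ^ 2)" using an pos(6) by (rule mult_left_mono)
    also have "\<dots> = Kc * \<alpha>0 ^ n / t k ^ 2" by simp
    also have "\<dots> \<le> Mb * c / 2 / t k ^ 2"
    proof (rule divide_right_mono)
      have "2 * Kc * \<alpha>0 ^ n / c \<le> Mb" unfolding Mb_def by simp
      thus "Kc * \<alpha>0 ^ n \<le> Mb * c / 2" using pos by (simp add: field_simps)
    qed simp
    finally have noise: "a k * (Kc * a k ^ n) \<le> a k * (Mb * c / 2 / t k ^ 2)"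
      using ak by (intro mult_left_mono) auto
    have "u (Suc k) \<le> (1 - c * a k) * u k + a k * (Kc * a k ^ n)"
      using k0[OF step(1)] by (simp add: mult.left_commute)
    also have "\<dots> \<le> (1 - c * a k) * (Mb / t k ^ 2) + a k * (Mb * c / 2 / t k ^ 2)"
      using step(3) ak by (intro add_mono[OF _ noise] mult_left_mono) auto
    also have "\<dots> = (1 - c * a k / 2) * (Mb / t k ^ 2)"
      using tk by (simp add: field_simps)
    also have "\<dots> \<le> (1 - 2 / t k) * (Mb / t k ^ 2)"
      using ca4 Mb0 tk by (intro mult_right_mono) auto
    also have "\<dots> = Mb * ((1 - 2 / t k) / (t k)\<^sup>2)" by simp
    also have "\<dots> \<le> Mb * (1 / (t k + 1)\<^sup>2)"
      using inverse_square_step[OF tk(1)] Mb0 by (rule mult_left_mono)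
    finally show ?case unfolding t_def by (simp add: add_ac)
  qed
  show ?thesis
  proof (rule summable_comparison_test')
    show "summable (\<lambda>k. Mb * inverse (real k ^ 2))"
      by (intro summable_mult inverse_power_summable) simp
    fix k assume "Suc k0 \<le> k"
    hence "u k \<le> Mb / t k ^ 2" "Mb / t k ^ 2 \<le> Mb / real k ^ 2"
      using bound pos Mb0 unfolding t_def by (auto intro!: divide_left_mono power_mono mult_pos_pos)
    thus "norm (u k) \<le> Mb * inverse (real k ^ 2)" using u[of k] by (simp add: divide_inverse)
  qed
qed

section \<open>Filtrations, gradients and conditional expectations\<close>

lemma space_natural_filtration [simp]: "space (natural_filtration M X k) = space M"
  unfolding natural_filtration_def by (simp add: space_measure_of_conv)

lemma sets_natural_filtration:
  "sets (natural_filtration M X k) =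
     sigma_sets (space M) (\<Union>i\<in>{..k}. {X i -` B \<inter> space M | B. B \<in> sets borel})"
  unfolding natural_filtration_def by (rule sets_measure_of) auto

lemma subalgebra_natural_filtration:
  assumes "\<And>i. X i \<in> borel_measurable M"
  shows "subalgebra M (natural_filtration M X k)"
  unfolding subalgebra_def sets_natural_filtration
  using assms by (auto intro!: sets.sigma_sets_subset measurable_sets)

lemma measurable_natural_filtration:
  assumes "j \<le> k"
  shows "X j \<in> borel_measurable (natural_filtration M X k)"
proof (rule measurableI)
  fix B :: "'b set" assume "B \<in> sets borel"
  hence "X j -` B \<inter> space M \<in> (\<Union>i\<in>{..k}. {X i -` B \<inter> space M | B. B \<in> sets borel})"
    using assms by auto
  thus "X j -` B \<inter> space (natural_filtration M X k) \<in> sets (natural_filtration M X k)"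
    unfolding sets_natural_filtration by auto
qed simp

lemma (in finite_measure) sigma_finite_subalgebra_natural_filtration:
  assumes "\<And>i. X i \<in> borel_measurable M"
  shows "sigma_finite_subalgebra M (natural_filtration M X k)"
  by (intro finite_measure_subalgebra_is_sigma_finite finite_measure_subalgebra.intro
      finite_measure_subalgebra_axioms.intro subalgebra_natural_filtration assms finite_measure_axioms)

text \<open>Each component of the gradient is a pointwise limit of difference quotients of the
  continuous function \<Phi>.\<close>
lemma borel_measurable_gradient:
  fixes \<Phi> :: "'d::euclidean_space \<Rightarrow> real"
  assumes grad: "\<And>y. (\<Phi> has_derivative (\<lambda>h. G y \<bullet> h)) (at y)"
  shows "G \<in> borel_measurable borel"
proof -
  have [measurable]: "\<Phi> \<in> borel_measurable borel"
    using grad has_derivative_continuous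
    by (intro borel_measurable_continuous_onI continuous_at_imp_continuous_on) blast
  have "(\<lambda>y. G y \<bullet> b) \<in> borel_measurable borel" for b
  proof (rule borel_measurable_LIMSEQ_real)
    fix y
    have "((\<lambda>t::real. y + t *\<^sub>R b) has_derivative (\<lambda>t. t *\<^sub>R b)) (at 0)"
      by (auto intro!: derivative_eq_intros)
    from has_derivative_compose[OF this grad[of "y + 0 *\<^sub>R b"]]
    have "((\<lambda>t. \<Phi> (y + t *\<^sub>R b)) has_derivative (\<lambda>t. G y \<bullet> (t *\<^sub>R b))) (at 0)" by simp
    moreover have "(\<lambda>t. G y \<bullet> (t *\<^sub>R b)) = (*) (G y \<bullet> b)" by (rule ext) simp
    ultimately have "((\<lambda>t. \<Phi> (y + t *\<^sub>R b)) has_real_derivative G y \<bullet> b) (at 0)"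
      by (simp add: has_field_derivative_def)
    hence "((\<lambda>t. (\<Phi> (y + t *\<^sub>R b) - \<Phi> y) / t) \<longlongrightarrow> G y \<bullet> b) (at 0)"
      by (simp add: DERIV_def)
    moreover have "(\<lambda>i. 1 / real (Suc i)) \<longlonglongrightarrow> 0" by (rule LIMSEQ_Suc[OF lim_const_over_n])
    ultimately have "((\<lambda>t. (\<Phi> (y + t *\<^sub>R b) - \<Phi> y) / t) \<circ> (\<lambda>i. 1 / real (Suc i))) \<longlonglongrightarrow> G y \<bullet> b"
      unfolding tendsto_at_iff_sequentially by auto
    thus "(\<lambda>i. (\<Phi> (y + (1 / real (Suc i)) *\<^sub>R b) - \<Phi> y) * real (Suc i)) \<longlonglongrightarrow> G y \<bullet> b"
      by (simp add: o_def)
  qed measurable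
  hence "(\<lambda>y. \<Sum>b\<in>Basis. (G y \<bullet> b) *\<^sub>R b) \<in> borel_measurable borel" by measurable
  thus ?thesis by (simp add: euclidean_representation)
qed

lemma gradient_norm_square_le:
  fixes \<Phi> :: "'d::real_inner \<Rightarrow> real"
  assumes nonneg: "\<And>y. 0 \<le> \<Phi> y" and L: "0 < L"
    and smooth: "\<And>y z. \<Phi> z \<le> \<Phi> y + G y \<bullet> (z - y) + L / 2 * (norm (z - y))\<^sup>2"
  shows "(norm (G y))\<^sup>2 \<le> 2 * L * \<Phi> y"
proof -
  \<comment> \<open>descent step from y of length 1/L along the negative gradient\<close>
  have "\<Phi> (y - (1 / L) *\<^sub>R G y)
      \<le> \<Phi> y + G y \<bullet> (- (1 / L) *\<^sub>R G y) + L / 2 * (norm (- (1 / L) *\<^sub>R G y))\<^sup>2"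
    using smooth[where y = y and z = "y - (1 / L) *\<^sub>R G y"] by simp
  also have "G y \<bullet> (- (1 / L) *\<^sub>R G y) = - (norm (G y))\<^sup>2 / L" by (simp add: power2_norm_eq_inner)
  also have "L / 2 * (norm (- (1 / L) *\<^sub>R G y))\<^sup>2 = (norm (G y))\<^sup>2 / (2 * L)"
    using L by (simp add: power2_eq_square field_simps)
  finally have "0 \<le> \<Phi> y - (norm (G y))\<^sup>2 / L + (norm (G y))\<^sup>2 / (2 * L)"
    using nonneg[of "y - (1 / L) *\<^sub>R G y"] by linarith
  thus ?thesis using L by (simp add: field_simps)
qed

lemma (in sigma_finite_subalgebra) integral_inner_eq_zero_of_cond_exp:
  fixes f w :: "'a \<Rightarrow> 'd::euclidean_space"
  assumes centered: "\<And>b. b \<in> Basis \<Longrightarrow> AE \<omega> in M. real_cond_exp M F (\<lambda>\<omega>. w \<omega> \<bullet> b) \<omega> = 0"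
    and f: "f \<in> borel_measurable F" and w[measurable]: "w \<in> borel_measurable M"
    and int: "integrable M (\<lambda>\<omega>. norm (f \<omega>) * norm (w \<omega>))"
  shows "integrable M (\<lambda>\<omega>. f \<omega> \<bullet> w \<omega>)" "(\<integral>\<omega>. f \<omega> \<bullet> w \<omega> \<partial>M) = 0"
proof -
  have fM[measurable]: "f \<in> borel_measurable M" using f subalg by (rule measurable_from_subalg[rotated])
  have fb[measurable]: "(\<lambda>\<omega>. f \<omega> \<bullet> b) \<in> borel_measurable F" for b using f by measurable
  have comp_int: "integrable M (\<lambda>\<omega>. (f \<omega> \<bullet> b) * (w \<omega> \<bullet> b))" if "b \<in> Basis" for b
    using that by (intro Bochner_Integration.integrable_bound[OF int])
      (auto simp: abs_mult intro!: mult_mono Basis_le_norm)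
  have comp_zero: "(\<integral>\<omega>. (f \<omega> \<bullet> b) * (w \<omega> \<bullet> b) \<partial>M) = 0" if b: "b \<in> Basis" for b
  proof -
    have "(\<integral>\<omega>. (f \<omega> \<bullet> b) * (w \<omega> \<bullet> b) \<partial>M)
        = (\<integral>\<omega>. (f \<omega> \<bullet> b) * real_cond_exp M F (\<lambda>\<omega>. w \<omega> \<bullet> b) \<omega> \<partial>M)"
      by (rule real_cond_exp_intg(2)[symmetric, OF comp_int[OF b] fb]) measurable
    also have "\<dots> = (\<integral>\<omega>. 0 \<partial>M)"
      using centered[OF b] by (intro integral_cong_AE) auto
    finally show ?thesis by simp
  qed
  have inner: "f \<omega> \<bullet> w \<omega> = (\<Sum>b\<in>Basis. (f \<omega> \<bullet> b) * (w \<omega> \<bullet> b))" for \<omega>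
    by (rule euclidean_inner)
  show "integrable M (\<lambda>\<omega>. f \<omega> \<bullet> w \<omega>)" unfolding inner using comp_int by auto
  show "(\<integral>\<omega>. f \<omega> \<bullet> w \<omega> \<partial>M) = 0" unfolding inner using comp_int comp_zero by simp
qed

lemma (in sigma_finite_subalgebra) integral_mult_le_of_nn_cond_exp_le:
  fixes h Z G :: "'a \<Rightarrow> real"
  assumes cond: "AE \<omega> in M. nn_cond_exp M F (\<lambda>\<omega>. ennreal (Z \<omega>)) \<omega> \<le> ennreal (G \<omega>)"
    and h: "h \<in> borel_measurable F" "\<And>\<omega>. 0 \<le> h \<omega>"
    and Z[measurable]: "Z \<in> borel_measurable M" "\<And>\<omega>. 0 \<le> Z \<omega>" and G: "\<And>\<omega>. 0 \<le> G \<omega>"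
    and int: "integrable M (\<lambda>\<omega>. h \<omega> * G \<omega>)"
  shows "integrable M (\<lambda>\<omega>. h \<omega> * Z \<omega>)" "(\<integral>\<omega>. h \<omega> * Z \<omega> \<partial>M) \<le> (\<integral>\<omega>. h \<omega> * G \<omega> \<partial>M)"
proof -
  have hM[measurable]: "h \<in> borel_measurable M" using h(1) subalg by (rule measurable_from_subalg[rotated])
  have "(\<integral>\<^sup>+\<omega>. ennreal (h \<omega> * Z \<omega>) \<partial>M) = (\<integral>\<^sup>+\<omega>. ennreal (h \<omega>) * ennreal (Z \<omega>) \<partial>M)"
    using h Z by (simp add: ennreal_mult)
  also have "\<dots> = (\<integral>\<^sup>+\<omega>. ennreal (h \<omega>) * nn_cond_exp M F (\<lambda>\<omega>. ennreal (Z \<omega>)) \<omega> \<partial>M)"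
    by (rule nn_cond_exp_intg[symmetric]) (use h(1) in measurable)
  also have "\<dots> \<le> (\<integral>\<^sup>+\<omega>. ennreal (h \<omega>) * ennreal (G \<omega>) \<partial>M)"
    using cond by (intro nn_integral_mono_AE) (auto elim!: eventually_mono intro: mult_left_mono)
  also have "\<dots> = (\<integral>\<^sup>+\<omega>. ennreal (h \<omega> * G \<omega>) \<partial>M)" using h G by (simp add: ennreal_mult)
  also have "\<dots> = ennreal (\<integral>\<omega>. h \<omega> * G \<omega> \<partial>M)"
    using int h G by (intro nn_integral_eq_integral) auto
  finally have le: "(\<integral>\<^sup>+\<omega>. ennreal (h \<omega> * Z \<omega>) \<partial>M) \<le> ennreal (\<integral>\<omega>. h \<omega> * G \<omega> \<partial>M)" .
  show int': "integrable M (\<lambda>\<omega>. h \<omega> * Z \<omega>)"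
    using le h Z by (intro integrableI_bounded) (auto simp: top.not_eq_extremum order_le_less_trans)
  have "ennreal (\<integral>\<omega>. h \<omega> * Z \<omega> \<partial>M) \<le> ennreal (\<integral>\<omega>. h \<omega> * G \<omega> \<partial>M)"
    using le int' h Z by (simp add: nn_integral_eq_integral)
  moreover have "0 \<le> (\<integral>\<omega>. h \<omega> * G \<omega> \<partial>M)" using h G by (intro integral_nonneg_AE) auto
  ultimately show "(\<integral>\<omega>. h \<omega> * Z \<omega> \<partial>M) \<le> (\<integral>\<omega>. h \<omega> * G \<omega> \<partial>M)"
    by (simp add: ennreal_le_iff)
qed

lemma AE_tendsto_zero_of_summable_integral:
  fixes Z :: "nat \<Rightarrow> 'a \<Rightarrow> real"
  assumes [measurable]: "\<And>k. Z k \<in> borel_measurable M"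
    and nonneg: "\<And>k \<omega>. 0 \<le> Z k \<omega>" and int: "\<And>k. integrable M (Z k)"
    and summable: "summable (\<lambda>k. \<integral>\<omega>. Z k \<omega> \<partial>M)"
  shows "AE \<omega> in M. (\<lambda>k. Z k \<omega>) \<longlonglongrightarrow> 0"
proof -
  have "(\<integral>\<^sup>+\<omega>. (\<Sum>k. ennreal (Z k \<omega>)) \<partial>M) = (\<Sum>k. \<integral>\<^sup>+\<omega>. ennreal (Z k \<omega>) \<partial>M)"
    by (rule nn_integral_suminf) measurable
  also have "\<dots> = (\<Sum>k. ennreal (\<integral>\<omega>. Z k \<omega> \<partial>M))"
    using int nonneg by (intro suminf_cong nn_integral_eq_integral) auto
  also have "\<dots> = ennreal (\<Sum>k. \<integral>\<omega>. Z k \<omega> \<partial>M)"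
    using summable nonneg by (intro suminf_ennreal2 integral_nonneg_AE) auto
  finally have "AE \<omega> in M. (\<Sum>k. ennreal (Z k \<omega>)) \<noteq> \<infinity>"
    by (intro nn_integral_noteq_infinite) auto
  thus ?thesis
  proof eventually_elim
    case (elim \<omega>)
    hence "summable (\<lambda>k. Z k \<omega>)" using nonneg by (intro summable_suminf_not_top) auto
    thus ?case by (rule summable_LIMSEQ_zero)
  qed
qed

section \<open>The stochastic approximation scheme\<close>

locale stochastic_approximation =
  fixes M :: "'a measure"
    and x w :: "nat \<Rightarrow> 'a \<Rightarrow> 'd::euclidean_space"
    and H :: "'d \<Rightarrow> 'd" and xs :: 'd
    and \<Phi> :: "'d \<Rightarrow> real" and grad\<Phi> :: "'d \<Rightarrow> 'd"
    and \<eta> c1 c2 L2 C \<alpha>0 K \<xi> :: real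
    and A B :: "nat \<Rightarrow> real"
  assumes prob_space: "prob_space M"
    and x_meas: "\<And>k. x k \<in> borel_measurable M"
    and w_meas: "\<And>k. w k \<in> borel_measurable M"
    and iter: "\<And>k \<omega>. \<omega> \<in> space M \<Longrightarrow>
        x (Suc k) \<omega> = x k \<omega> + (\<alpha>0 * (real k + K) powr - \<xi>) *\<^sub>R (H (x k \<omega>) - x k \<omega> + w k \<omega>)"
    and \<alpha>0_pos: "0 < \<alpha>0" and K_pos: "0 < K" and \<xi>: "0 < \<xi>" "\<xi> \<le> 1"
    and fixpt: "H xs = xs"
    and \<Phi>_nonneg: "\<And>y. 0 \<le> \<Phi> y"
    and \<Phi>_grad: "\<And>y. (\<Phi> has_derivative (\<lambda>h. grad\<Phi> y \<bullet> h)) (at y)"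
    and \<eta>_pos: "0 < \<eta>" and c1_pos: "0 < c1" and c2_pos: "0 < c2" and L2_pos: "0 < L2"
    and drift: "\<And>y. grad\<Phi> (y - xs) \<bullet> (H y - y) \<le> - \<eta> * \<Phi> (y - xs)"
    and smooth: "\<And>y z. \<Phi> z \<le> \<Phi> y + grad\<Phi> y \<bullet> (z - y) + L2 / 2 * (norm (z - y))\<^sup>2"
    and \<Phi>_lower: "\<And>y. c1 * (norm (y - xs))\<^sup>2 \<le> \<Phi> (y - xs)"
    and \<Phi>_upper: "\<And>y. \<Phi> (y - xs) \<le> c2 * (norm (y - xs))\<^sup>2"
    and unbiased: "\<And>k b. b \<in> Basis \<Longrightarrow>
        AE \<omega> in M. real_cond_exp M (natural_filtration M x k) (\<lambda>\<omega>. w k \<omega> \<bullet> b) \<omega> = 0"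
    \<comment> \<open>the p-th moment assumption is only needed for the even integers p = 2 j\<close>
    and noise_moments: "\<And>j k. 1 \<le> j \<Longrightarrow> AE \<omega> in M.
        nn_cond_exp M (natural_filtration M x k) (\<lambda>\<omega>. ennreal (norm (w k \<omega>) ^ (2 * j))) \<omega>
          \<le> ennreal (A j + B j * norm (x k \<omega> - xs) ^ (2 * j))"
    and A_nonneg: "\<And>j. 0 \<le> A j" and B_nonneg: "\<And>j. 0 \<le> B j"
    and C_nonneg: "0 \<le> C"
    and lipschitz: "\<And>y z. norm (H y - H z) \<le> C * norm (y - z)"
begin

sublocale prob_space M by (rule prob_space)

declare x_meas [measurable] w_meas [measurable]

abbreviation F :: "nat \<Rightarrow> 'a measure" where
  "F k \<equiv> natural_filtration M x k"

definition \<alpha> :: "nat \<Rightarrow> real" where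
  "\<alpha> k = \<alpha>0 * (real k + K) powr - \<xi>"

definition V :: "nat \<Rightarrow> 'a \<Rightarrow> real" where
  "V k \<omega> = \<Phi> (x k \<omega> - xs)"

definition g :: "nat \<Rightarrow> 'a \<Rightarrow> 'd" where
  "g k \<omega> = grad\<Phi> (x k \<omega> - xs)"

text \<open>The factor (1 + C)^2 / c1 comes from the second-order term of the smoothness bound:
  |H x - x|^2 \<le> (1 + C)^2 |x - xs|^2 \<le> (1 + C)^2 \<Phi>(x - xs) / c1.\<close>
definition \<beta> :: "nat \<Rightarrow> real" where
  "\<beta> k = 1 - \<eta> * \<alpha> k + L2 * (1 + C)\<^sup>2 / c1 * (\<alpha> k)\<^sup>2"

text \<open>On the events bounded_start R all moments of x k - xs and w k are finite, and they
  exhaust the sample space as R grows.\<close>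
definition bounded_start :: "real \<Rightarrow> 'a set" where
  "bounded_start R = {\<omega> \<in> space M. norm (x 0 \<omega> - xs) \<le> R}"

lemma sigma_finite_subalgebra_F: "sigma_finite_subalgebra M (F k)"
  by (intro sigma_finite_subalgebra_natural_filtration x_meas)

lemma x_measurable_F: "j \<le> k \<Longrightarrow> x j \<in> borel_measurable (F k)"
  by (rule measurable_natural_filtration)

lemma \<Phi>_measurable [measurable]: "\<Phi> \<in> borel_measurable borel"
  using \<Phi>_grad has_derivative_continuous
  by (intro borel_measurable_continuous_onI continuous_at_imp_continuous_on) blast

lemma grad\<Phi>_measurable [measurable]: "grad\<Phi> \<in> borel_measurable borel"
  using \<Phi>_grad by (rule borel_measurable_gradient)

lemma \<alpha>_pos: "0 < \<alpha> k"
  unfolding \<alpha>_def using \<alpha>0_pos K_pos by simp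

lemma V_nonneg: "0 \<le> V k \<omega>"
  unfolding V_def by (rule \<Phi>_nonneg)

lemma V_measurable [measurable]: "V k \<in> borel_measurable M"
  unfolding V_def by measurable

lemma g_measurable [measurable]: "g k \<in> borel_measurable M"
  unfolding g_def by measurable

lemma V_measurable_F: "V k \<in> borel_measurable (F k)"
  using x_measurable_F[of k k] unfolding V_def by measurable

lemma g_measurable_F: "g k \<in> borel_measurable (F k)"
  using x_measurable_F[of k k] unfolding g_def by measurable

lemma bounded_start_sets [measurable]: "bounded_start R \<in> sets M"
  unfolding bounded_start_def by measurable

lemma indicator_bounded_start_measurable_F:
  "(\<lambda>\<omega>. indicator (bounded_start R) \<omega> :: real) \<in> borel_measurable (F k)"
proof -
  have [measurable]: "x 0 \<in> borel_measurable (F k)" by (rule x_measurable_F) simp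
  have "{\<omega> \<in> space (F k). norm (x 0 \<omega> - xs) \<le> R} \<in> sets (F k)" by measurable
  thus ?thesis unfolding bounded_start_def by simp
qed

lemma H_displacement_le: "norm (H y - y) \<le> (1 + C) * norm (y - xs)"
proof -
  have "norm (H y - y) \<le> norm (H y - H xs) + norm (y - xs)"
    using norm_triangle_ineq4[of "H y - H xs" "y - xs"] fixpt by simp
  thus ?thesis using lipschitz[of y xs] by (simp add: algebra_simps)
qed

lemma err_step:
  "\<omega> \<in> space M \<Longrightarrow> x (Suc k) \<omega> - xs = (x k \<omega> - xs) + \<alpha> k *\<^sub>R (H (x k \<omega>) - x k \<omega> + w k \<omega>)"
  using iter unfolding \<alpha>_def by simp

lemma norm_err_step_le:
  assumes "\<omega> \<in> space M"
  shows "norm (x (Suc k) \<omega> - xs) \<le> (1 + \<alpha> k * (1 + C)) * norm (x k \<omega> - xs) + \<alpha> k * norm (w k \<omega>)"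
proof -
  have "norm (x (Suc k) \<omega> - xs) \<le> norm (x k \<omega> - xs) + \<alpha> k * norm (H (x k \<omega>) - x k \<omega> + w k \<omega>)"
    using err_step[OF assms] \<alpha>_pos[of k] by (metis norm_scaleR norm_triangle_ineq abs_of_pos)
  also have "norm (H (x k \<omega>) - x k \<omega> + w k \<omega>) \<le> (1 + C) * norm (x k \<omega> - xs) + norm (w k \<omega>)"
    using H_displacement_le[of "x k \<omega>"] norm_triangle_ineq[of "H (x k \<omega>) - x k \<omega>" "w k \<omega>"] by linarith
  finally show ?thesis using \<alpha>_pos[of k] by (simp add: algebra_simps mult_left_mono)
qed

lemma inner_g_noise_square_le: "(g k \<omega> \<bullet> w k \<omega>)\<^sup>2 \<le> 2 * L2 * V k \<omega> * (norm (w k \<omega>))\<^sup>2"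
proof -
  have "(g k \<omega> \<bullet> w k \<omega>)\<^sup>2 \<le> (norm (g k \<omega>))\<^sup>2 * (norm (w k \<omega>))\<^sup>2"
    by (metis Cauchy_Schwarz_ineq2 abs_ge_zero power_mono power2_abs power_mult_distrib)
  also have "\<dots> \<le> 2 * L2 * V k \<omega> * (norm (w k \<omega>))\<^sup>2"
    unfolding g_def V_def using \<Phi>_nonneg L2_pos smooth
    by (intro mult_right_mono gradient_norm_square_le) auto
  finally show ?thesis .
qed

lemma V_step:
  assumes \<omega>: "\<omega> \<in> space M"
  shows "V (Suc k) \<omega> \<le> \<beta> k * V k \<omega> + \<alpha> k * (g k \<omega> \<bullet> w k \<omega>) + L2 * (\<alpha> k)\<^sup>2 * (norm (w k \<omega>))\<^sup>2"
proof -
  define e where "e = x k \<omega> - xs"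
  define d where "d = H (x k \<omega>) - x k \<omega>"
  have "V (Suc k) \<omega> \<le> \<Phi> e + grad\<Phi> e \<bullet> (\<alpha> k *\<^sub>R (d + w k \<omega>)) + L2 / 2 * (norm (\<alpha> k *\<^sub>R (d + w k \<omega>)))\<^sup>2"
    using smooth[where y = e and z = "e + \<alpha> k *\<^sub>R (d + w k \<omega>)"]
    unfolding V_def err_step[OF \<omega>] e_def d_def by (simp add: add.assoc)
  also have "grad\<Phi> e \<bullet> (\<alpha> k *\<^sub>R (d + w k \<omega>)) = \<alpha> k * (grad\<Phi> e \<bullet> d) + \<alpha> k * (g k \<omega> \<bullet> w k \<omega>)"
    unfolding g_def e_def by (simp add: inner_add_right distrib_left)
  also have "\<alpha> k * (grad\<Phi> e \<bullet> d) \<le> \<alpha> k * (- \<eta> * \<Phi> e)"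
    using drift[of "x k \<omega>"] \<alpha>_pos[of k] unfolding e_def d_def by (intro mult_left_mono) auto
  also have "(norm (\<alpha> k *\<^sub>R (d + w k \<omega>)))\<^sup>2 = (\<alpha> k)\<^sup>2 * (norm (d + w k \<omega>))\<^sup>2"
    using \<alpha>_pos[of k] by (simp add: power_mult_distrib)
  also have "(norm (d + w k \<omega>))\<^sup>2 \<le> 2 * (norm d)\<^sup>2 + 2 * (norm (w k \<omega>))\<^sup>2"
    using square_add_le[of "norm d" "norm (w k \<omega>)"] norm_triangle_ineq[of d "w k \<omega>"]
    by (smt (verit) norm_ge_zero power_mono)
  also have "(norm d)\<^sup>2 \<le> (1 + C)\<^sup>2 * (norm e)\<^sup>2"
    using H_displacement_le[of "x k \<omega>"] unfolding d_def e_def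
    by (metis norm_ge_zero power_mono power_mult_distrib)
  also have "(norm e)\<^sup>2 \<le> \<Phi> e / c1"
    using \<Phi>_lower[of "x k \<omega>"] c1_pos unfolding e_def by (simp add: field_simps)
  finally have "V (Suc k) \<omega> \<le> \<Phi> e + (\<alpha> k * (- \<eta> * \<Phi> e) + \<alpha> k * (g k \<omega> \<bullet> w k \<omega>))
      + L2 / 2 * ((\<alpha> k)\<^sup>2 * (2 * ((1 + C)\<^sup>2 * (\<Phi> e / c1)) + 2 * (norm (w k \<omega>))\<^sup>2))"
    using L2_pos by (simp add: mult_left_mono)
  also have "\<dots> = \<beta> k * V k \<omega> + \<alpha> k * (g k \<omega> \<bullet> w k \<omega>) + L2 * (\<alpha> k)\<^sup>2 * (norm (w k \<omega>))\<^sup>2"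
    unfolding \<beta>_def V_def e_def using c1_pos by (simp add: field_simps)
  finally show ?thesis .
qed


lemma integrable_indicator_bounded_start: "integrable M (\<lambda>\<omega>. indicator (bounded_start R) \<omega> :: real)"
  by (rule integrable_const_bound[where B = 1]) auto

lemma integrable_noise_moment:
  fixes h :: "'a \<Rightarrow> real"
  assumes "1 \<le> j" "h \<in> borel_measurable (F k)" "\<And>\<omega>. 0 \<le> h \<omega>"
    and "integrable M (\<lambda>\<omega>. h \<omega> * (A j + B j * norm (x k \<omega> - xs) ^ (2 * j)))"
  shows "integrable M (\<lambda>\<omega>. h \<omega> * norm (w k \<omega>) ^ (2 * j))"
    "(\<integral>\<omega>. h \<omega> * norm (w k \<omega>) ^ (2 * j) \<partial>M) \<le> (\<integral>\<omega>. h \<omega> * (A j + B j * norm (x k \<omega> - xs) ^ (2 * j)) \<partial>M)"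
  using sigma_finite_subalgebra.integral_mult_le_of_nn_cond_exp_le[OF sigma_finite_subalgebra_F
      noise_moments[OF assms(1)] assms(2,3)] assms(4) A_nonneg B_nonneg
  by auto

lemma integrable_noise_power_of_err_power:
  assumes err: "\<And>j. integrable M (\<lambda>\<omega>. indicator (bounded_start R) \<omega> * norm (x k \<omega> - xs) ^ j)"
  shows "integrable M (\<lambda>\<omega>. indicator (bounded_start R) \<omega> * norm (w k \<omega>) ^ j)"
proof -
  let ?I = "\<lambda>\<omega>. indicator (bounded_start R) \<omega> :: real"
  have "integrable M (\<lambda>\<omega>. A (Suc j) * ?I \<omega> + B (Suc j) * (?I \<omega> * norm (x k \<omega> - xs) ^ (2 * Suc j)))"
    using integrable_indicator_bounded_start err
    by (intro Bochner_Integration.integrable_add integrable_mult_right)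
  hence "integrable M (\<lambda>\<omega>. ?I \<omega> * norm (w k \<omega>) ^ (2 * Suc j))"
    by (intro integrable_noise_moment indicator_bounded_start_measurable_F) (auto simp: algebra_simps)
  hence "integrable M (\<lambda>\<omega>. ?I \<omega> + ?I \<omega> * norm (w k \<omega>) ^ (2 * Suc j))"
    using integrable_indicator_bounded_start by auto
  moreover have "norm (w k \<omega>) ^ j \<le> 1 + norm (w k \<omega>) ^ (2 * Suc j)" for \<omega>
  proof (cases "norm (w k \<omega>) \<le> 1")
    case True
    thus ?thesis by (simp add: power_le_one add_increasing2)
  next
    case False
    hence "norm (w k \<omega>) ^ j \<le> norm (w k \<omega>) ^ (2 * Suc j)" by (intro power_increasing) auto
    thus ?thesis by simp
  qed
  ultimately show ?thesis
    by (elim Bochner_Integration.integrable_bound) (auto simp: indicator_def)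
qed

lemma integrable_err_power:
  "integrable M (\<lambda>\<omega>. indicator (bounded_start R) \<omega> * norm (x k \<omega> - xs) ^ j)"
proof (induction k arbitrary: j)
  case 0
  show ?case
  proof (rule integrable_const_bound[where B = "max R 0 ^ j"])
    show "AE \<omega> in M. norm (indicator (bounded_start R) \<omega> * norm (x 0 \<omega> - xs) ^ j) \<le> max R 0 ^ j"
      by (auto simp: bounded_start_def indicator_def intro!: power_mono)
  qed measurable
next
  case (Suc k)
  define c where "c = 1 + \<alpha> k * (1 + C)"
  have c: "0 \<le> c" unfolding c_def using \<alpha>_pos[of k] C_nonneg by simp
  have "integrable M (\<lambda>\<omega>. 2 ^ j * (c ^ j * (indicator (bounded_start R) \<omega> * norm (x k \<omega> - xs) ^ j)
      + \<alpha> k ^ j * (indicator (bounded_start R) \<omega> * norm (w k \<omega>) ^ j)))"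
    using Suc integrable_noise_power_of_err_power[OF Suc] by auto
  moreover have "norm (x (Suc k) \<omega> - xs) ^ j \<le> 2 ^ j * (c ^ j * norm (x k \<omega> - xs) ^ j + \<alpha> k ^ j * norm (w k \<omega>) ^ j)"
    if "\<omega> \<in> space M" for \<omega>
  proof -
    have "norm (x (Suc k) \<omega> - xs) ^ j \<le> (c * norm (x k \<omega> - xs) + \<alpha> k * norm (w k \<omega>)) ^ j"
      using norm_err_step_le[OF that, of k] unfolding c_def by (intro power_mono) auto
    also have "\<dots> \<le> 2 ^ j * ((c * norm (x k \<omega> - xs)) ^ j + (\<alpha> k * norm (w k \<omega>)) ^ j)"
      using c \<alpha>_pos[of k] by (intro power_add_le_two_power) auto
    finally show ?thesis by (simp add: power_mult_distrib)
  qed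
  ultimately show ?case
    using c \<alpha>_pos[of k] by (elim Bochner_Integration.integrable_bound) (auto simp: indicator_def)
qed

lemma integrable_noise_power: "integrable M (\<lambda>\<omega>. indicator (bounded_start R) \<omega> * norm (w k \<omega>) ^ j)"
  by (intro integrable_noise_power_of_err_power integrable_err_power)


definition poly_bounded :: "nat \<Rightarrow> ('a \<Rightarrow> real) \<Rightarrow> bool" where
  "poly_bounded k f \<longleftrightarrow>
     (\<exists>c r. \<forall>\<omega>\<in>space M. \<bar>f \<omega>\<bar> \<le> c * (1 + norm (x k \<omega> - xs) + norm (w k \<omega>)) ^ r)"

lemma poly_boundedI:
  "(\<And>\<omega>. \<omega> \<in> space M \<Longrightarrow> \<bar>f \<omega>\<bar> \<le> c * (1 + norm (x k \<omega> - xs) + norm (w k \<omega>)) ^ r) \<Longrightarrow> poly_bounded k f"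
  unfolding poly_bounded_def by blast

lemma poly_bounded_mono:
  "poly_bounded k f \<Longrightarrow> (\<And>\<omega>. \<omega> \<in> space M \<Longrightarrow> \<bar>h \<omega>\<bar> \<le> \<bar>f \<omega>\<bar>) \<Longrightarrow> poly_bounded k h"
  unfolding poly_bounded_def by (meson order_trans)

lemma poly_bounded_const: "poly_bounded k (\<lambda>_. c)"
  by (rule poly_boundedI[where c = "\<bar>c\<bar>" and r = 0]) simp

lemma poly_bounded_err: "poly_bounded k (\<lambda>\<omega>. norm (x k \<omega> - xs))"
  by (rule poly_boundedI[where c = 1 and r = 1]) simp

lemma poly_bounded_noise: "poly_bounded k (\<lambda>\<omega>. norm (w k \<omega>))"
  by (rule poly_boundedI[where c = 1 and r = 1]) simp

lemma poly_bounded_mult: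
  assumes "poly_bounded k f" "poly_bounded k h"
  shows "poly_bounded k (\<lambda>\<omega>. f \<omega> * h \<omega>)"
proof -
  obtain c r c' r' where f: "\<forall>\<omega>\<in>space M. \<bar>f \<omega>\<bar> \<le> c * (1 + norm (x k \<omega> - xs) + norm (w k \<omega>)) ^ r"
    and h: "\<forall>\<omega>\<in>space M. \<bar>h \<omega>\<bar> \<le> c' * (1 + norm (x k \<omega> - xs) + norm (w k \<omega>)) ^ r'"
    using assms unfolding poly_bounded_def by blast
  show ?thesis
  proof (rule poly_boundedI[where c = "c * c'" and r = "r + r'"])
    fix \<omega> assume "\<omega> \<in> space M"
    hence f\<omega>: "\<bar>f \<omega>\<bar> \<le> c * (1 + norm (x k \<omega> - xs) + norm (w k \<omega>)) ^ r"
      and h\<omega>: "\<bar>h \<omega>\<bar> \<le> c' * (1 + norm (x k \<omega> - xs) + norm (w k \<omega>)) ^ r'"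
      using f h by auto
    have "\<bar>f \<omega>\<bar> * \<bar>h \<omega>\<bar> \<le> (c * (1 + norm (x k \<omega> - xs) + norm (w k \<omega>)) ^ r) *
        (c' * (1 + norm (x k \<omega> - xs) + norm (w k \<omega>)) ^ r')"
      using f\<omega> h\<omega> abs_ge_zero[of "f \<omega>"] by (intro mult_mono) simp_all
    thus "\<bar>f \<omega> * h \<omega>\<bar> \<le> c * c' * (1 + norm (x k \<omega> - xs) + norm (w k \<omega>)) ^ (r + r')"
      by (simp add: abs_mult power_add mult_ac)
  qed
qed

lemma poly_bounded_add:
  assumes "poly_bounded k f" "poly_bounded k h"
  shows "poly_bounded k (\<lambda>\<omega>. f \<omega> + h \<omega>)"
proof -
  obtain c r c' r' where f: "\<forall>\<omega>\<in>space M. \<bar>f \<omega>\<bar> \<le> c * (1 + norm (x k \<omega> - xs) + norm (w k \<omega>)) ^ r"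
    and h: "\<forall>\<omega>\<in>space M. \<bar>h \<omega>\<bar> \<le> c' * (1 + norm (x k \<omega> - xs) + norm (w k \<omega>)) ^ r'"
    using assms unfolding poly_bounded_def by blast
  show ?thesis
  proof (rule poly_boundedI[where c = "\<bar>c\<bar> + \<bar>c'\<bar>" and r = "r + r'"])
    fix \<omega> assume \<omega>: "\<omega> \<in> space M"
    define P where "P = 1 + norm (x k \<omega> - xs) + norm (w k \<omega>)"
    have P: "1 \<le> P" unfolding P_def by simp
    have "c * P ^ r \<le> \<bar>c\<bar> * P ^ (r + r')" "c' * P ^ r' \<le> \<bar>c'\<bar> * P ^ (r + r')"
      using P by (auto intro!: mult_mono power_increasing)
    moreover have "\<bar>f \<omega>\<bar> \<le> c * P ^ r" "\<bar>h \<omega>\<bar> \<le> c' * P ^ r'" using f h \<omega> unfolding P_def by auto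
    ultimately show "\<bar>f \<omega> + h \<omega>\<bar> \<le> (\<bar>c\<bar> + \<bar>c'\<bar>) * P ^ (r + r')"
      using abs_triangle_ineq[of "f \<omega>" "h \<omega>"] by (simp add: distrib_right)
  qed
qed

lemma poly_bounded_abs: "poly_bounded k f \<Longrightarrow> poly_bounded k (\<lambda>\<omega>. \<bar>f \<omega>\<bar>)"
  by (erule poly_bounded_mono) simp

lemma poly_bounded_power: "poly_bounded k f \<Longrightarrow> poly_bounded k (\<lambda>\<omega>. f \<omega> ^ j)"
  by (induction j) (simp_all add: poly_bounded_const poly_bounded_mult)

lemma poly_bounded_sum: "(\<And>j. j \<in> J \<Longrightarrow> poly_bounded k (f j)) \<Longrightarrow> poly_bounded k (\<lambda>\<omega>. \<Sum>j\<in>J. f j \<omega>)"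
  by (induction J rule: infinite_finite_induct) (auto simp: poly_bounded_const poly_bounded_add)

lemma poly_bounded_V: "poly_bounded k (V k)"
proof (rule poly_bounded_mono)
  show "poly_bounded k (\<lambda>\<omega>. c2 * (norm (x k \<omega> - xs) * norm (x k \<omega> - xs)))"
    by (intro poly_bounded_mult poly_bounded_const poly_bounded_err)
  show "\<bar>V k \<omega>\<bar> \<le> \<bar>c2 * (norm (x k \<omega> - xs) * norm (x k \<omega> - xs))\<bar>" for \<omega>
    using \<Phi>_upper[of "x k \<omega>"] V_nonneg[of k \<omega>] unfolding V_def by (simp add: power2_eq_square)
qed

lemma poly_bounded_norm_g: "poly_bounded k (\<lambda>\<omega>. norm (g k \<omega>))"
proof (rule poly_bounded_mono)
  show "poly_bounded k (\<lambda>\<omega>. 1 + 2 * L2 * V k \<omega>)"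
    by (intro poly_bounded_add poly_bounded_mult poly_bounded_const poly_bounded_V)
  show "\<bar>norm (g k \<omega>)\<bar> \<le> \<bar>1 + 2 * L2 * V k \<omega>\<bar>" for \<omega>
  proof -
    have "0 \<le> (norm (g k \<omega>) - 1)\<^sup>2" by simp
    hence "norm (g k \<omega>) \<le> 1 + norm (g k \<omega>) * norm (g k \<omega>)"
      using norm_ge_zero[of "g k \<omega>"] unfolding power2_eq_square by argo
    hence "norm (g k \<omega>) \<le> 1 + (norm (g k \<omega>))\<^sup>2" by (simp add: power2_eq_square)
    also have "(norm (g k \<omega>))\<^sup>2 \<le> 2 * L2 * V k \<omega>"
      unfolding g_def V_def using \<Phi>_nonneg L2_pos smooth by (intro gradient_norm_square_le) auto
    finally show ?thesis using L2_pos V_nonneg[of k \<omega>] by simp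
  qed
qed

lemma poly_bounded_V_Suc: "poly_bounded k (V (Suc k))"
proof (rule poly_bounded_mono)
  define c where "c = 1 + \<alpha> k * (1 + C)"
  show "poly_bounded k (\<lambda>\<omega>. c2 * ((c * norm (x k \<omega> - xs) + \<alpha> k * norm (w k \<omega>)) ^ 2))"
    by (intro poly_bounded_mult poly_bounded_const poly_bounded_power poly_bounded_add
        poly_bounded_err poly_bounded_noise)
  fix \<omega> assume \<omega>: "\<omega> \<in> space M"
  have "(norm (x (Suc k) \<omega> - xs))\<^sup>2 \<le> (c * norm (x k \<omega> - xs) + \<alpha> k * norm (w k \<omega>))\<^sup>2"
    using norm_err_step_le[OF \<omega>] unfolding c_def by (intro power_mono) auto
  hence "V (Suc k) \<omega> \<le> c2 * (c * norm (x k \<omega> - xs) + \<alpha> k * norm (w k \<omega>))\<^sup>2"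
    using \<Phi>_upper[of "x (Suc k) \<omega>"] mult_left_mono[of _ _ c2] c2_pos unfolding V_def
    by (meson less_imp_le order_trans)
  thus "\<bar>V (Suc k) \<omega>\<bar> \<le> \<bar>c2 * (c * norm (x k \<omega> - xs) + \<alpha> k * norm (w k \<omega>))\<^sup>2\<bar>"
    using V_nonneg[of "Suc k" \<omega>] by simp
qed

lemma integrable_poly_bounded:
  assumes "f \<in> borel_measurable M" "poly_bounded k f"
  shows "integrable M (\<lambda>\<omega>. indicator (bounded_start R) \<omega> * f \<omega>)"
proof -
  let ?I = "\<lambda>\<omega>. indicator (bounded_start R) \<omega> :: real"
  obtain c r where f: "\<forall>\<omega>\<in>space M. \<bar>f \<omega>\<bar> \<le> c * (1 + norm (x k \<omega> - xs) + norm (w k \<omega>)) ^ r"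
    using assms(2) unfolding poly_bounded_def by blast
  have P: "(1 + norm (x k \<omega> - xs) + norm (w k \<omega>)) ^ r \<le> 4 ^ r * (1 + norm (x k \<omega> - xs) ^ r + norm (w k \<omega>) ^ r)" for \<omega>
  proof -
    have "(1 + norm (x k \<omega> - xs) + norm (w k \<omega>)) ^ r \<le> 2 ^ r * ((1 + norm (x k \<omega> - xs)) ^ r + norm (w k \<omega>) ^ r)"
      by (intro power_add_le_two_power) auto
    also have "(1 + norm (x k \<omega> - xs)) ^ r \<le> 2 ^ r * (1 + norm (x k \<omega> - xs) ^ r)"
      using power_add_le_two_power[of 1 "norm (x k \<omega> - xs)" r] by simp
    also have "norm (w k \<omega>) ^ r \<le> 2 ^ r * norm (w k \<omega>) ^ r" by (simp add: mult_le_cancel_right1)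
    also have "2 ^ r * (2 ^ r * (1 + norm (x k \<omega> - xs) ^ r) + 2 ^ r * norm (w k \<omega>) ^ r)
        = 4 ^ r * (1 + norm (x k \<omega> - xs) ^ r + norm (w k \<omega>) ^ r)"
    proof -
      have "(4::real) ^ r = 2 ^ r * 2 ^ r" by (simp flip: power_mult_distrib)
      thus ?thesis by (simp add: algebra_simps)
    qed
    finally show ?thesis by simp
  qed
  have "integrable M (\<lambda>\<omega>. \<bar>c\<bar> * 4 ^ r * (?I \<omega> + ?I \<omega> * norm (x k \<omega> - xs) ^ r + ?I \<omega> * norm (w k \<omega>) ^ r))"
    using integrable_indicator_bounded_start integrable_err_power integrable_noise_power by auto
  moreover have "norm (?I \<omega> * f \<omega>)
      \<le> norm (\<bar>c\<bar> * 4 ^ r * (?I \<omega> + ?I \<omega> * norm (x k \<omega> - xs) ^ r + ?I \<omega> * norm (w k \<omega>) ^ r))"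
    if "\<omega> \<in> space M" for \<omega>
  proof -
    have "\<bar>f \<omega>\<bar> \<le> c * (1 + norm (x k \<omega> - xs) + norm (w k \<omega>)) ^ r" using f that by auto
    also have "\<dots> \<le> \<bar>c\<bar> * (1 + norm (x k \<omega> - xs) + norm (w k \<omega>)) ^ r" by (rule mult_right_mono) auto
    also have "\<dots> \<le> \<bar>c\<bar> * (4 ^ r * (1 + norm (x k \<omega> - xs) ^ r + norm (w k \<omega>) ^ r))"
      using P by (rule mult_left_mono) simp
    finally show ?thesis by (simp add: indicator_def abs_mult)
  qed
  ultimately show ?thesis using assms(1)
    by (elim Bochner_Integration.integrable_bound) auto
qed


lemma V_power_expansion:
  assumes "even n" "2 \<le> n"
  obtains q where "0 \<le> q"
    "\<And>k \<omega>. \<omega> \<in> space M \<Longrightarrow> 0 \<le> \<beta> k \<Longrightarrow> \<beta> k \<le> 1 \<Longrightarrow> V (Suc k) \<omega> ^ n \<le> \<beta> k ^ n * V k \<omega> ^ n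
      + n * \<beta> k ^ (n - 1) * V k \<omega> ^ (n - 1) * \<alpha> k * (g k \<omega> \<bullet> w k \<omega>)
      + q * (\<Sum>j=1..n. \<alpha> k ^ (2 * j) * V k \<omega> ^ (n - j) * norm (w k \<omega>) ^ (2 * j))"
proof -
  obtain q where q: "0 \<le> q" and expansion: "\<And>(V::real) (V'::real) (\<beta>::real) (a::real) (s::real) (N::real). 0 \<le> V \<Longrightarrow> 0 \<le> V' \<Longrightarrow> 0 \<le> N \<Longrightarrow>
      0 \<le> \<beta> \<Longrightarrow> \<beta> \<le> 1 \<Longrightarrow> 0 \<le> a \<Longrightarrow> s\<^sup>2 \<le> 2 * L2 * V * N \<Longrightarrow> V' \<le> \<beta> * V + a * s + L2 * a\<^sup>2 * N \<Longrightarrow>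
      V' ^ n \<le> \<beta> ^ n * V ^ n + n * \<beta> ^ (n - 1) * V ^ (n - 1) * a * s
        + q * (\<Sum>j=1..n. a ^ (2 * j) * V ^ (n - j) * N ^ j)"
    by (rule lyapunov_power_expansion[OF less_imp_le[OF L2_pos] assms]) blast
  show thesis
  proof (rule that[OF q])
    fix k \<omega> assume "\<omega> \<in> space M" "0 \<le> \<beta> k" "\<beta> k \<le> 1"
    from expansion[OF V_nonneg V_nonneg zero_le_power2 this(2,3) less_imp_le[OF \<alpha>_pos] inner_g_noise_square_le V_step[OF this(1)]]
    show "V (Suc k) \<omega> ^ n \<le> \<beta> k ^ n * V k \<omega> ^ n + n * \<beta> k ^ (n - 1) * V k \<omega> ^ (n - 1) * \<alpha> k * (g k \<omega> \<bullet> w k \<omega>)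
      + q * (\<Sum>j=1..n. \<alpha> k ^ (2 * j) * V k \<omega> ^ (n - j) * norm (w k \<omega>) ^ (2 * j))"
      by (simp only: power_mult)
  qed
qed

lemma conditional_moment_bound_le:
  assumes "j \<le> n"
  shows "V k \<omega> ^ (n - j) * (A j + B j * norm (x k \<omega> - xs) ^ (2 * j))
    \<le> (A j + B j / c1 ^ j) * (V k \<omega> ^ (n - j) + V k \<omega> ^ n)"
proof -
  have "norm (x k \<omega> - xs) ^ (2 * j) \<le> (V k \<omega> / c1) ^ j"
    unfolding power_mult using \<Phi>_lower[of "x k \<omega>"] c1_pos
    by (intro power_mono) (auto simp: V_def field_simps)
  hence "V k \<omega> ^ (n - j) * (B j * norm (x k \<omega> - xs) ^ (2 * j)) \<le> V k \<omega> ^ (n - j) * (B j * (V k \<omega> / c1) ^ j)"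
    using B_nonneg V_nonneg by (intro mult_left_mono) auto
  also have "\<dots> = B j / c1 ^ j * V k \<omega> ^ n"
    using assms by (simp add: field_simps flip: power_add)
  finally have "V k \<omega> ^ (n - j) * (B j * norm (x k \<omega> - xs) ^ (2 * j)) \<le> B j / c1 ^ j * V k \<omega> ^ n" .
  moreover have "0 \<le> A j * V k \<omega> ^ n" "0 \<le> B j / c1 ^ j * V k \<omega> ^ (n - j)"
    using A_nonneg[of j] B_nonneg[of j] V_nonneg[of k \<omega>] c1_pos by simp_all
  ultimately show ?thesis by (simp add: algebra_simps)
qed


lemma moment_integrand_le:
  assumes "0 \<le> q"
  shows "q * (\<Sum>j=1..n. \<alpha> k ^ (2 * j) * (V k \<omega> ^ (n - j) * (A j + B j * norm (x k \<omega> - xs) ^ (2 * j))))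
    \<le> q * (\<Sum>i=1..n. A i + B i / c1 ^ i) * (\<Sum>j=1..n. \<alpha> k ^ (2 * j) * (V k \<omega> ^ (n - j) + V k \<omega> ^ n))"
proof -
  have "\<alpha> k ^ (2 * j) * (V k \<omega> ^ (n - j) * (A j + B j * norm (x k \<omega> - xs) ^ (2 * j)))
      \<le> (\<Sum>i=1..n. A i + B i / c1 ^ i) * (\<alpha> k ^ (2 * j) * (V k \<omega> ^ (n - j) + V k \<omega> ^ n))"
    if j: "j \<in> {1..n}" for j
  proof -
    have "A j + B j / c1 ^ j \<le> (\<Sum>i=1..n. A i + B i / c1 ^ i)"
      using j A_nonneg B_nonneg c1_pos by (intro member_le_sum) auto
    hence "(A j + B j / c1 ^ j) * (V k \<omega> ^ (n - j) + V k \<omega> ^ n)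
        \<le> (\<Sum>i=1..n. A i + B i / c1 ^ i) * (V k \<omega> ^ (n - j) + V k \<omega> ^ n)"
      using V_nonneg by (intro mult_right_mono) auto
    with conditional_moment_bound_le[of j n k \<omega>] j
    have "V k \<omega> ^ (n - j) * (A j + B j * norm (x k \<omega> - xs) ^ (2 * j))
        \<le> (\<Sum>i=1..n. A i + B i / c1 ^ i) * (V k \<omega> ^ (n - j) + V k \<omega> ^ n)" by simp
    thus ?thesis using \<alpha>_pos[of k] by (simp add: mult.left_commute mult_left_mono)
  qed
  hence "(\<Sum>j=1..n. \<alpha> k ^ (2 * j) * (V k \<omega> ^ (n - j) * (A j + B j * norm (x k \<omega> - xs) ^ (2 * j))))
      \<le> (\<Sum>i=1..n. A i + B i / c1 ^ i) * (\<Sum>j=1..n. \<alpha> k ^ (2 * j) * (V k \<omega> ^ (n - j) + V k \<omega> ^ n))"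
    unfolding sum_distrib_left by (rule sum_mono)
  thus ?thesis using assms by (simp add: mult.assoc mult_left_mono)
qed

lemma integral_cross_term_eq_zero:
  assumes "f \<in> borel_measurable (F k)" "poly_bounded k f"
  shows "integrable M (\<lambda>\<omega>. indicator (bounded_start R) \<omega> * f \<omega> * (g k \<omega> \<bullet> w k \<omega>))"
    "(\<integral>\<omega>. indicator (bounded_start R) \<omega> * f \<omega> * (g k \<omega> \<bullet> w k \<omega>) \<partial>M) = 0"
proof -
  let ?I = "\<lambda>\<omega>. indicator (bounded_start R) \<omega> :: real"
  have [measurable]: "?I \<in> borel_measurable (F k)" "f \<in> borel_measurable (F k)" "g k \<in> borel_measurable (F k)"
    by (fact indicator_bounded_start_measurable_F assms(1) g_measurable_F)+
  have [measurable]: "f \<in> borel_measurable M"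
    by (rule measurable_from_subalg[OF subalgebra_natural_filtration[OF x_meas] assms(1)])
  have "poly_bounded k (\<lambda>\<omega>. \<bar>f \<omega>\<bar> * (norm (g k \<omega>) * norm (w k \<omega>)))"
    by (intro poly_bounded_mult poly_bounded_abs assms(2) poly_bounded_norm_g poly_bounded_noise)
  hence "integrable M (\<lambda>\<omega>. ?I \<omega> * (\<bar>f \<omega>\<bar> * (norm (g k \<omega>) * norm (w k \<omega>))))"
    by (rule integrable_poly_bounded[rotated]) measurable
  moreover have "(\<lambda>\<omega>. ?I \<omega> * (\<bar>f \<omega>\<bar> * (norm (g k \<omega>) * norm (w k \<omega>))))
      = (\<lambda>\<omega>. norm ((?I \<omega> * f \<omega>) *\<^sub>R g k \<omega>) * norm (w k \<omega>))"
    by (auto simp: abs_mult indicator_def)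
  ultimately have "integrable M (\<lambda>\<omega>. norm ((?I \<omega> * f \<omega>) *\<^sub>R g k \<omega>) * norm (w k \<omega>))" by simp
  from sigma_finite_subalgebra.integral_inner_eq_zero_of_cond_exp[OF sigma_finite_subalgebra_F
      unbiased _ w_meas this]
  show "integrable M (\<lambda>\<omega>. ?I \<omega> * f \<omega> * (g k \<omega> \<bullet> w k \<omega>))"
    "(\<integral>\<omega>. ?I \<omega> * f \<omega> * (g k \<omega> \<bullet> w k \<omega>) \<partial>M) = 0"
    by simp_all
qed

lemma integral_noise_term_le:
  assumes "1 \<le> j"
  shows "integrable M (\<lambda>\<omega>. indicator (bounded_start R) \<omega> * V k \<omega> ^ (n - j) * (A j + B j * norm (x k \<omega> - xs) ^ (2 * j)))"
    "integrable M (\<lambda>\<omega>. indicator (bounded_start R) \<omega> * V k \<omega> ^ (n - j) * norm (w k \<omega>) ^ (2 * j))"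
    "(\<integral>\<omega>. indicator (bounded_start R) \<omega> * V k \<omega> ^ (n - j) * norm (w k \<omega>) ^ (2 * j) \<partial>M)
      \<le> (\<integral>\<omega>. indicator (bounded_start R) \<omega> * V k \<omega> ^ (n - j) * (A j + B j * norm (x k \<omega> - xs) ^ (2 * j)) \<partial>M)"
proof -
  let ?h = "\<lambda>\<omega>. indicator (bounded_start R) \<omega> * V k \<omega> ^ (n - j) :: real"
  have [measurable]: "(\<lambda>\<omega>. indicator (bounded_start R) \<omega> :: real) \<in> borel_measurable (F k)"
    "V k \<in> borel_measurable (F k)"
    by (fact indicator_bounded_start_measurable_F V_measurable_F)+
  have "poly_bounded k (\<lambda>\<omega>. V k \<omega> ^ (n - j) * (A j + B j * norm (x k \<omega> - xs) ^ (2 * j)))"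
    by (intro poly_bounded_mult poly_bounded_power poly_bounded_add poly_bounded_const
        poly_bounded_V poly_bounded_err)
  hence "integrable M (\<lambda>\<omega>. ?h \<omega> * (A j + B j * norm (x k \<omega> - xs) ^ (2 * j)))"
    unfolding mult.assoc by (rule integrable_poly_bounded[rotated]) measurable
  thus "integrable M (\<lambda>\<omega>. indicator (bounded_start R) \<omega> * V k \<omega> ^ (n - j) * (A j + B j * norm (x k \<omega> - xs) ^ (2 * j)))"
    by simp
  from integrable_noise_moment[OF assms _ _ this]
  show "integrable M (\<lambda>\<omega>. indicator (bounded_start R) \<omega> * V k \<omega> ^ (n - j) * norm (w k \<omega>) ^ (2 * j))"
    "(\<integral>\<omega>. indicator (bounded_start R) \<omega> * V k \<omega> ^ (n - j) * norm (w k \<omega>) ^ (2 * j) \<partial>M)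
      \<le> (\<integral>\<omega>. indicator (bounded_start R) \<omega> * V k \<omega> ^ (n - j) * (A j + B j * norm (x k \<omega> - xs) ^ (2 * j)) \<partial>M)"
    by (auto simp: V_nonneg)
qed

text \<open>Conditioning the expansion of V (k+1)^n on F k: the term linear in the noise has
  mean zero, and the moments of the noise are replaced by their conditional bounds.\<close>
lemma moment_step_le:
  assumes q: "0 \<le> q"
    and expansion: "\<And>\<omega>. \<omega> \<in> space M \<Longrightarrow> V (Suc k) \<omega> ^ n \<le> \<beta> k ^ n * V k \<omega> ^ n
      + n * \<beta> k ^ (n - 1) * V k \<omega> ^ (n - 1) * \<alpha> k * (g k \<omega> \<bullet> w k \<omega>)
      + q * (\<Sum>j=1..n. \<alpha> k ^ (2 * j) * V k \<omega> ^ (n - j) * norm (w k \<omega>) ^ (2 * j))"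
  shows "(\<integral>\<omega>. indicator (bounded_start R) \<omega> * V (Suc k) \<omega> ^ n \<partial>M)
    \<le> (\<integral>\<omega>. indicator (bounded_start R) \<omega> * (\<beta> k ^ n * V k \<omega> ^ n
      + q * (\<Sum>j=1..n. \<alpha> k ^ (2 * j) * (V k \<omega> ^ (n - j) * (A j + B j * norm (x k \<omega> - xs) ^ (2 * j))))) \<partial>M)"
proof -
  let ?I = "\<lambda>\<omega>. indicator (bounded_start R) \<omega> :: real"
  define c where "c \<omega> = n * \<beta> k ^ (n - 1) * V k \<omega> ^ (n - 1) * \<alpha> k" for \<omega>
  define N where "N j \<omega> = ?I \<omega> * V k \<omega> ^ (n - j) * norm (w k \<omega>) ^ (2 * j)" for j \<omega>
  define N' where "N' j \<omega> = ?I \<omega> * V k \<omega> ^ (n - j) * (A j + B j * norm (x k \<omega> - xs) ^ (2 * j))" for j \<omega>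
  have c_meas: "c \<in> borel_measurable (F k)" unfolding c_def using V_measurable_F[of k] by measurable
  have c_bounded: "poly_bounded k c"
    unfolding c_def by (intro poly_bounded_mult poly_bounded_const poly_bounded_power poly_bounded_V)
  note cross = integral_cross_term_eq_zero[OF c_meas c_bounded, of R]
  have noise: "integrable M (N' j)" "integrable M (N j)" "integral\<^sup>L M (N j) \<le> integral\<^sup>L M (N' j)"
    if "j \<in> {1..n}" for j
    using integral_noise_term_le[of j R k n] that unfolding N_def N'_def by auto
  have main: "integrable M (\<lambda>\<omega>. ?I \<omega> * (\<beta> k ^ n * V k \<omega> ^ n))"
    by (intro integrable_poly_bounded[of _ k] poly_bounded_mult poly_bounded_const poly_bounded_power
        poly_bounded_V) measurable
  have sums: "integrable M (\<lambda>\<omega>. q * (\<Sum>j=1..n. \<alpha> k ^ (2 * j) * N j \<omega>))"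
    "integrable M (\<lambda>\<omega>. q * (\<Sum>j=1..n. \<alpha> k ^ (2 * j) * N' j \<omega>))"
    using noise by (auto intro!: integrable_mult_right integrable_sum)
  have "(\<integral>\<omega>. ?I \<omega> * V (Suc k) \<omega> ^ n \<partial>M)
      \<le> (\<integral>\<omega>. ?I \<omega> * (\<beta> k ^ n * V k \<omega> ^ n) + ?I \<omega> * c \<omega> * (g k \<omega> \<bullet> w k \<omega>)
        + q * (\<Sum>j=1..n. \<alpha> k ^ (2 * j) * N j \<omega>) \<partial>M)"
  proof (rule integral_mono)
    show "integrable M (\<lambda>\<omega>. ?I \<omega> * V (Suc k) \<omega> ^ n)"
      by (intro integrable_poly_bounded[of _ k] poly_bounded_power poly_bounded_V_Suc) measurable
    show "integrable M (\<lambda>\<omega>. ?I \<omega> * (\<beta> k ^ n * V k \<omega> ^ n) + ?I \<omega> * c \<omega> * (g k \<omega> \<bullet> w k \<omega>)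
        + q * (\<Sum>j=1..n. \<alpha> k ^ (2 * j) * N j \<omega>))"
      using main cross sums by (intro Bochner_Integration.integrable_add) auto
    show "?I \<omega> * V (Suc k) \<omega> ^ n \<le> ?I \<omega> * (\<beta> k ^ n * V k \<omega> ^ n) + ?I \<omega> * c \<omega> * (g k \<omega> \<bullet> w k \<omega>)
        + q * (\<Sum>j=1..n. \<alpha> k ^ (2 * j) * N j \<omega>)" if "\<omega> \<in> space M" for \<omega>
      using expansion[OF that] unfolding c_def N_def by (cases "\<omega> \<in> bounded_start R") (simp_all add: mult.assoc)
  qed
  also have "\<dots> = (\<integral>\<omega>. ?I \<omega> * (\<beta> k ^ n * V k \<omega> ^ n) \<partial>M) + q * (\<Sum>j=1..n. \<alpha> k ^ (2 * j) * integral\<^sup>L M (N j))"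
    using main cross sums noise by simp
  also have "\<dots> \<le> (\<integral>\<omega>. ?I \<omega> * (\<beta> k ^ n * V k \<omega> ^ n) \<partial>M) + q * (\<Sum>j=1..n. \<alpha> k ^ (2 * j) * integral\<^sup>L M (N' j))"
    using noise q \<alpha>_pos[of k] by (intro add_left_mono mult_left_mono sum_mono) auto
  also have "\<dots> = (\<integral>\<omega>. ?I \<omega> * (\<beta> k ^ n * V k \<omega> ^ n) + q * (\<Sum>j=1..n. \<alpha> k ^ (2 * j) * N' j \<omega>) \<partial>M)"
    using main sums noise by simp
  also have "\<dots> = (\<integral>\<omega>. ?I \<omega> * (\<beta> k ^ n * V k \<omega> ^ n + q * (\<Sum>j=1..n. \<alpha> k ^ (2 * j) *
      (V k \<omega> ^ (n - j) * (A j + B j * norm (x k \<omega> - xs) ^ (2 * j))))) \<partial>M)"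
    unfolding N'_def by (intro Bochner_Integration.integral_cong) (auto simp: indicator_def)
  finally show ?thesis .
qed

lemma moment_affine_bound:
  assumes "0 \<le> b"
  shows "(\<integral>\<omega>. indicator (bounded_start R) \<omega> * (a * V k \<omega> ^ n + b) \<partial>M)
    \<le> a * (\<integral>\<omega>. indicator (bounded_start R) \<omega> * V k \<omega> ^ n \<partial>M) + b"
proof -
  have "(\<integral>\<omega>. indicator (bounded_start R) \<omega> * (a * V k \<omega> ^ n + b) \<partial>M)
      = (\<integral>\<omega>. a * (indicator (bounded_start R) \<omega> * V k \<omega> ^ n) + b * indicator (bounded_start R) \<omega> \<partial>M)"
    by (simp add: algebra_simps)
  also have "\<dots> = a * (\<integral>\<omega>. indicator (bounded_start R) \<omega> * V k \<omega> ^ n \<partial>M) + b * measure M (bounded_start R)"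
    using integrable_poly_bounded[OF _ poly_bounded_power[OF poly_bounded_V], of k n R]
      integrable_indicator_bounded_start[of R]
    by simp
  also have "b * measure M (bounded_start R) \<le> b" using assms prob_le_1 by (simp add: mult_left_le)
  finally show ?thesis by simp
qed

lemma moment_recursion:
  assumes n: "even n" "2 \<le> n"
  obtains Kc where "0 \<le> Kc" "\<forall>\<^sub>F k in sequentially.
    (\<integral>\<omega>. indicator (bounded_start R) \<omega> * V (Suc k) \<omega> ^ n \<partial>M)
      \<le> (1 - real n * \<eta> / 4 * \<alpha> k) * (\<integral>\<omega>. indicator (bounded_start R) \<omega> * V k \<omega> ^ n \<partial>M) + Kc * \<alpha> k ^ Suc n"
proof -
  let ?I = "\<lambda>\<omega>. indicator (bounded_start R) \<omega> :: real"
  obtain q where q: "0 \<le> q" and expansion: "\<And>k \<omega>. \<omega> \<in> space M \<Longrightarrow> 0 \<le> \<beta> k \<Longrightarrow> \<beta> k \<le> 1 \<Longrightarrow>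
      V (Suc k) \<omega> ^ n \<le> \<beta> k ^ n * V k \<omega> ^ n + n * \<beta> k ^ (n - 1) * V k \<omega> ^ (n - 1) * \<alpha> k * (g k \<omega> \<bullet> w k \<omega>)
        + q * (\<Sum>j=1..n. \<alpha> k ^ (2 * j) * V k \<omega> ^ (n - j) * norm (w k \<omega>) ^ (2 * j))"
    by (rule V_power_expansion[OF n]) blast
  define Q where "Q = q * (\<Sum>i=1..n. A i + B i / c1 ^ i)"
  have Q: "0 \<le> Q" unfolding Q_def using q A_nonneg B_nonneg c1_pos by (intro mult_nonneg_nonneg sum_nonneg) auto
  have D: "0 \<le> L2 * (1 + C)\<^sup>2 / c1" using L2_pos c1_pos by simp
  obtain a1 Kc where a1: "0 < a1" and Kc: "0 \<le> Kc"
    and \<beta>_bounds: "\<And>a. 0 < a \<Longrightarrow> a \<le> a1 \<Longrightarrow>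
      0 \<le> 1 - \<eta> * a + L2 * (1 + C)\<^sup>2 / c1 * a\<^sup>2 \<and> 1 - \<eta> * a + L2 * (1 + C)\<^sup>2 / c1 * a\<^sup>2 \<le> 1"
    and poly: "\<And>a V. 0 < a \<Longrightarrow> a \<le> a1 \<Longrightarrow> 0 \<le> V \<Longrightarrow>
      (1 - \<eta> * a + L2 * (1 + C)\<^sup>2 / c1 * a\<^sup>2) ^ n * V ^ n + Q * (\<Sum>j=1..n. a ^ (2 * j) * (V ^ (n - j) + V ^ n))
        \<le> (1 - real n * \<eta> / 4 * a) * V ^ n + Kc * a ^ Suc n"
    by (rule drift_polynomial_bound[OF \<eta>_pos D Q]) blast
  have "\<forall>\<^sub>F k in sequentially. \<alpha> k < a1"
    using order_tendstoD(2)[OF step_size_tendsto_zero[OF \<xi>(1)] a1] unfolding \<alpha>_def .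
  hence "\<forall>\<^sub>F k in sequentially. (\<integral>\<omega>. ?I \<omega> * V (Suc k) \<omega> ^ n \<partial>M)
      \<le> (1 - real n * \<eta> / 4 * \<alpha> k) * (\<integral>\<omega>. ?I \<omega> * V k \<omega> ^ n \<partial>M) + Kc * \<alpha> k ^ Suc n"
  proof eventually_elim
    case (elim k)
    have \<beta>: "0 \<le> \<beta> k" "\<beta> k \<le> 1" using \<beta>_bounds[OF \<alpha>_pos] elim unfolding \<beta>_def by auto
    have "(\<integral>\<omega>. ?I \<omega> * V (Suc k) \<omega> ^ n \<partial>M) \<le> (\<integral>\<omega>. ?I \<omega> * (\<beta> k ^ n * V k \<omega> ^ n
        + q * (\<Sum>j=1..n. \<alpha> k ^ (2 * j) * (V k \<omega> ^ (n - j) * (A j + B j * norm (x k \<omega> - xs) ^ (2 * j))))) \<partial>M)"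
      by (rule moment_step_le[OF q expansion[OF _ \<beta>]])
    also have "\<dots> \<le> (\<integral>\<omega>. ?I \<omega> * ((1 - real n * \<eta> / 4 * \<alpha> k) * V k \<omega> ^ n + Kc * \<alpha> k ^ Suc n) \<partial>M)"
    proof (rule integral_mono)
      fix \<omega>
      have "q * (\<Sum>j=1..n. \<alpha> k ^ (2 * j) * (V k \<omega> ^ (n - j) * (A j + B j * norm (x k \<omega> - xs) ^ (2 * j))))
        \<le> Q * (\<Sum>j=1..n. \<alpha> k ^ (2 * j) * (V k \<omega> ^ (n - j) + V k \<omega> ^ n))"
        unfolding Q_def by (rule moment_integrand_le[OF q])
      with poly[OF \<alpha>_pos less_imp_le[OF elim] V_nonneg[of k \<omega>]]
      have "\<beta> k ^ n * V k \<omega> ^ n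
          + q * (\<Sum>j=1..n. \<alpha> k ^ (2 * j) * (V k \<omega> ^ (n - j) * (A j + B j * norm (x k \<omega> - xs) ^ (2 * j))))
        \<le> (1 - real n * \<eta> / 4 * \<alpha> k) * V k \<omega> ^ n + Kc * \<alpha> k ^ Suc n"
        unfolding \<beta>_def by linarith
      thus "?I \<omega> * (\<beta> k ^ n * V k \<omega> ^ n
          + q * (\<Sum>j=1..n. \<alpha> k ^ (2 * j) * (V k \<omega> ^ (n - j) * (A j + B j * norm (x k \<omega> - xs) ^ (2 * j)))))
        \<le> ?I \<omega> * ((1 - real n * \<eta> / 4 * \<alpha> k) * V k \<omega> ^ n + Kc * \<alpha> k ^ Suc n)"
        by (simp add: indicator_def)
    qed (intro integrable_poly_bounded[of _ k] poly_bounded_add poly_bounded_mult poly_bounded_sum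
        poly_bounded_const poly_bounded_power poly_bounded_V poly_bounded_err; measurable)+
    also have "\<dots> \<le> (1 - real n * \<eta> / 4 * \<alpha> k) * (\<integral>\<omega>. ?I \<omega> * V k \<omega> ^ n \<partial>M) + Kc * \<alpha> k ^ Suc n"
      using Kc \<alpha>_pos[of k] by (intro moment_affine_bound) simp
    finally show ?case .
  qed
  with Kc show thesis by (rule that)
qed

text \<open>Moments of high enough order are summable: n \<xi> \<ge> 2 makes the remainder
  \<alpha>_k^(n+1) summable, and n \<eta> \<alpha>0 \<ge> 16 makes the contraction strong enough.\<close>
lemma summable_moment:
  obtains n where "1 \<le> n" "summable (\<lambda>k. \<integral>\<omega>. indicator (bounded_start R) \<omega> * V k \<omega> ^ n \<partial>M)"
proof -
  define m where "m = nat \<lceil>1 / \<xi> + 8 / (\<eta> * \<alpha>0)\<rceil> + 1"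
  define n where "n = 2 * m"
  have "1 / \<xi> + 8 / (\<eta> * \<alpha>0) \<le> real m" unfolding m_def by linarith
  moreover have "0 \<le> 1 / \<xi>" "0 \<le> 8 / (\<eta> * \<alpha>0)" using \<xi> \<eta>_pos \<alpha>0_pos by simp_all
  ultimately have "1 / \<xi> \<le> real m" "8 / (\<eta> * \<alpha>0) \<le> real m" by linarith+
  hence large: "2 \<le> real n * \<xi>" "4 \<le> real n * \<eta> / 4 * \<alpha>0"
    unfolding n_def using \<xi> \<eta>_pos \<alpha>0_pos by (auto simp: field_simps)
  have n: "even n" "2 \<le> n" unfolding n_def m_def by auto
  obtain Kc where "0 \<le> Kc" and rec: "\<forall>\<^sub>F k in sequentially.
      (\<integral>\<omega>. indicator (bounded_start R) \<omega> * V (Suc k) \<omega> ^ n \<partial>M)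
        \<le> (1 - real n * \<eta> / 4 * \<alpha> k) * (\<integral>\<omega>. indicator (bounded_start R) \<omega> * V k \<omega> ^ n \<partial>M) + Kc * \<alpha> k ^ Suc n"
    by (rule moment_recursion[OF n]) blast
  have nonneg: "0 \<le> (\<integral>\<omega>. indicator (bounded_start R) \<omega> * V k \<omega> ^ n \<partial>M)" for k
    by (intro integral_nonneg_AE) (simp add: V_nonneg)
  have "0 < real n * \<eta> / 4" using n \<eta>_pos by simp
  from summable_of_step_recursion[OF nonneg rec[unfolded \<alpha>_def] \<alpha>0_pos K_pos \<xi> this \<open>0 \<le> Kc\<close> large(2,1)]
  have "summable (\<lambda>k. \<integral>\<omega>. indicator (bounded_start R) \<omega> * V k \<omega> ^ n \<partial>M)" .
  with n show thesis by (intro that) auto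
qed

lemma tendsto_of_V_power_tendsto_zero:
  assumes n: "1 \<le> n" and lim: "(\<lambda>k. V k \<omega> ^ n) \<longlonglongrightarrow> 0"
  shows "(\<lambda>k. x k \<omega>) \<longlonglongrightarrow> xs"
proof -
  have "(\<lambda>k. root n (V k \<omega> ^ n)) \<longlonglongrightarrow> root n 0" using lim by (rule tendsto_real_root)
  moreover have "root n (V k \<omega> ^ n) = V k \<omega>" for k
    using n V_nonneg by (intro real_root_power_cancel) auto
  ultimately have "(\<lambda>k. V k \<omega> / c1) \<longlonglongrightarrow> 0" by (intro tendsto_divide_zero) simp
  hence sqrt_lim: "(\<lambda>k. sqrt (V k \<omega> / c1)) \<longlonglongrightarrow> 0" using tendsto_real_sqrt by fastforce
  have le: "norm (x k \<omega> - xs) \<le> sqrt (V k \<omega> / c1)" for k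
    using \<Phi>_lower[of "x k \<omega>"] c1_pos by (intro real_le_rsqrt) (simp add: V_def field_simps)
  have "(\<lambda>k. norm (x k \<omega> - xs)) \<longlonglongrightarrow> 0"
    by (rule tendsto_sandwich[OF always_eventually always_eventually tendsto_const sqrt_lim])
      (simp_all add: le)
  thus ?thesis by (simp only: tendsto_norm_zero_iff LIM_zero_iff)
qed

lemma AE_tendsto_on_bounded_start: "AE \<omega> in M. \<omega> \<in> bounded_start R \<longrightarrow> (\<lambda>k. x k \<omega>) \<longlonglongrightarrow> xs"
proof -
  obtain n where n: "1 \<le> n" and summable: "summable (\<lambda>k. \<integral>\<omega>. indicator (bounded_start R) \<omega> * V k \<omega> ^ n \<partial>M)"
    by (rule summable_moment)
  have "integrable M (\<lambda>\<omega>. indicator (bounded_start R) \<omega> * V k \<omega> ^ n)" for k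
    by (intro integrable_poly_bounded[of _ k] poly_bounded_power poly_bounded_V) measurable
  hence "AE \<omega> in M. (\<lambda>k. indicator (bounded_start R) \<omega> * V k \<omega> ^ n) \<longlonglongrightarrow> 0"
    using summable V_nonneg by (intro AE_tendsto_zero_of_summable_integral) auto
  thus ?thesis by eventually_elim (auto intro: tendsto_of_V_power_tendsto_zero[OF n])
qed

theorem AE_tendsto: "AE \<omega> in M. (\<lambda>k. x k \<omega>) \<longlonglongrightarrow> xs"
proof -
  have "\<forall>R::nat. AE \<omega> in M. \<omega> \<in> bounded_start R \<longrightarrow> (\<lambda>k. x k \<omega>) \<longlonglongrightarrow> xs"
    using AE_tendsto_on_bounded_start by blast
  hence "AE \<omega> in M. \<forall>R::nat. \<omega> \<in> bounded_start R \<longrightarrow> (\<lambda>k. x k \<omega>) \<longlonglongrightarrow> xs"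
    by (rule AE_all_countable[THEN iffD2])
  thus ?thesis
  proof (rule AE_mp, intro AE_I2 impI)
    fix \<omega> assume "\<omega> \<in> space M" "\<forall>R::nat. \<omega> \<in> bounded_start R \<longrightarrow> (\<lambda>k. x k \<omega>) \<longlonglongrightarrow> xs"
    moreover have "norm (x 0 \<omega> - xs) \<le> real (nat \<lceil>norm (x 0 \<omega> - xs)\<rceil>)" by linarith
    ultimately show "(\<lambda>k. x k \<omega>) \<longlonglongrightarrow> xs" unfolding bounded_start_def by blast
  qed
qed

end

lemma integer_moment_bounds:
  fixes w :: "nat \<Rightarrow> 'a \<Rightarrow> 'd::real_normed_vector" and x :: "nat \<Rightarrow> 'a \<Rightarrow> 'd"
  assumes "\<And>p::real. p > 1 \<Longrightarrow> \<exists>A B. A > 0 \<and> B \<ge> 0 \<and> (\<forall>k. AE \<omega> in M.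
        nn_cond_exp M (F k) (\<lambda>\<omega>. ennreal (norm (w k \<omega>) powr p)) \<omega>
          \<le> ennreal (A + B * norm (x k \<omega> - xs) powr p))"
  obtains A B :: "nat \<Rightarrow> real" where "\<And>j. 0 \<le> A j" "\<And>j. 0 \<le> B j"
    "\<And>j k. 1 \<le> j \<Longrightarrow> AE \<omega> in M. nn_cond_exp M (F k) (\<lambda>\<omega>. ennreal (norm (w k \<omega>) ^ (2 * j))) \<omega>
        \<le> ennreal (A j + B j * norm (x k \<omega> - xs) ^ (2 * j))"
proof -
  define P where "P j A B \<longleftrightarrow> 0 \<le> A \<and> 0 \<le> B \<and> (1 \<le> j \<longrightarrow> (\<forall>k. AE \<omega> in M.
      nn_cond_exp M (F k) (\<lambda>\<omega>. ennreal (norm (w k \<omega>) ^ (2 * j))) \<omega>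
        \<le> ennreal (A + B * norm (x k \<omega> - xs) ^ (2 * j))))" for j A B
  have "\<exists>A B. P j A B" for j
  proof (cases "1 \<le> j")
    case True
    then obtain A B where "0 < A" "0 \<le> B" "\<forall>k. AE \<omega> in M.
        nn_cond_exp M (F k) (\<lambda>\<omega>. ennreal (norm (w k \<omega>) powr real (2 * j))) \<omega>
          \<le> ennreal (A + B * norm (x k \<omega> - xs) powr real (2 * j))"
      using assms[of "real (2 * j)"] by auto
    moreover have "z powr real (2 * j) = z ^ (2 * j)" if "0 \<le> z" for z :: real
      using that True by (intro powr_realpow') auto
    ultimately have "P j A B" unfolding P_def by simp
    thus ?thesis by blast
  qed (auto simp: P_def)
  then obtain A B where "\<And>j. P j (A j) (B j)" by metis
  thus thesis unfolding P_def by (intro that[of A B]) blast+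
qed

theorem corollary2:
  fixes M :: "'a measure"
    and x w :: "nat \<Rightarrow> 'a \<Rightarrow> 'd::euclidean_space"
    and H :: "'d \<Rightarrow> 'd"
    and xs :: "'d"
    and \<Phi> :: "'d \<Rightarrow> real" and grad\<Phi> :: "'d \<Rightarrow> 'd"
    and \<eta> c1 c2 L2 C :: real
    and \<alpha>0 K \<xi> :: real
  assumes prob: "prob_space M"
    and x_meas: "\<And>k. x k \<in> borel_measurable M"
    and w_meas: "\<And>k. w k \<in> borel_measurable M"
    and iter: "\<And>k \<omega>. \<omega> \<in> space M \<Longrightarrow>
        x (Suc k) \<omega> = x k \<omega> + (\<alpha>0 * (real k + K) powr (- \<xi>)) *\<^sub>R (H (x k \<omega>) - x k \<omega> + w k \<omega>)"
    and alpha_pos: "\<alpha>0 > 0" and K_pos: "K > 0" and xi: "0 < \<xi>" "\<xi> \<le> 1"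
    \<comment> \<open>Drift Assumption\<close>
    and fixpt: "H xs = xs"
    and Phi_nonneg: "\<And>y. \<Phi> y \<ge> 0"
    and Phi_grad: "\<And>y. (\<Phi> has_derivative (\<lambda>h. grad\<Phi> y \<bullet> h)) (at y)"
    and consts_pos: "\<eta> > 0" "c1 > 0" "c2 > 0" "L2 > 0"
    and drift: "\<And>y. grad\<Phi> (y - xs) \<bullet> (H y - y) \<le> - \<eta> * \<Phi> (y - xs)"
    and smooth: "\<And>y z. \<Phi> z \<le> \<Phi> y + grad\<Phi> y \<bullet> (z - y) + L2 / 2 * (norm (z - y))\<^sup>2"
    and equiv: "\<And>y. c1 * (norm (y - xs))\<^sup>2 \<le> \<Phi> (y - xs)"
               "\<And>y. \<Phi> (y - xs) \<le> c2 * (norm (y - xs))\<^sup>2"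
    \<comment> \<open>Unbiased Noise Assumption (conditional expectation taken componentwise)\<close>
    and w_int: "\<And>k. integrable M (w k)"
    and unbiased: "\<And>k b. b \<in> Basis \<Longrightarrow>
        AE \<omega> in M. real_cond_exp M (natural_filtration M x k) (\<lambda>\<omega>. w k \<omega> \<bullet> b) \<omega> = 0"
    \<comment> \<open>p-th Moment Noise Assumption, for every p > 1\<close>
    and moments: "\<And>p::real. p > 1 \<Longrightarrow> \<exists>A B. A > 0 \<and> B \<ge> 0 \<and> (\<forall>k. AE \<omega> in M.
        nn_cond_exp M (natural_filtration M x k) (\<lambda>\<omega>. ennreal (norm (w k \<omega>) powr p)) \<omega>
          \<le> ennreal (A + B * norm (x k \<omega> - xs) powr p))"
    \<comment> \<open>Lipschitz Assumption\<close>
    and C_pos: "C > 0"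
    and lipschitz: "\<And>y z. norm (H y - H z) \<le> C * norm (y - z)"
  shows "AE \<omega> in M. (\<lambda>k. x k \<omega>) \<longlonglongrightarrow> xs"
proof -
  obtain A B where AB: "\<And>j. 0 \<le> A j" "\<And>j. 0 \<le> B j"
    "\<And>j k. 1 \<le> j \<Longrightarrow> AE \<omega> in M. nn_cond_exp M (natural_filtration M x k)
        (\<lambda>\<omega>. ennreal (norm (w k \<omega>) ^ (2 * j))) \<omega> \<le> ennreal (A j + B j * norm (x k \<omega> - xs) ^ (2 * j))"
    using integer_moment_bounds[OF moments] by blast
  interpret stochastic_approximation M x w H xs \<Phi> grad\<Phi> \<eta> c1 c2 L2 C \<alpha>0 K \<xi> A B
    by (rule stochastic_approximation.intro) (fact assms AB | use C_pos in simp)+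
  show ?thesis by (rule AE_tendsto)
qed

end
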